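(* Let $\mu\neq 0$ be real and let $\gamma=\gamma(s)$ be a non-geodesic curve in the $2$-space form $\mathbb M^2(\rho)$, parametrized by arc-length, with curvature $\kappa$. If $\gamma$ is a critical point of the energy $\mathbf{\Theta}_\mu(\gamma)=\int_\gamma e^{\mu\kappa}\,ds$, then $$\frac{d^2}{ds^2}\left(e^{\mu\kappa}\right)+\left(\kappa^2-\frac{\kappa}{\mu}+\rho\right)e^{\mu\kappa}=0.$$
   Context: $\mathbb M^2(\rho)$ denotes the simply connected complete Riemannian surface of constant curvature $\rho$ (Euclidean plane, round sphere or hyperbolic plane). $\kappa$ is the signed geodesic curvature of $\gamma$. Criticality is with respect to variations of $\gamma$ through regular curves in $\mathbb M^2(\rho)$, disregarding boundary terms (e.g. variations compactly supported in the interior of the curve). *)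

theory Defs
  imports "HOL-Analysis.Analysis"
begin

fun iter_dd :: "('a::real_normed_vector \<Rightarrow> 'b::real_normed_vector) \<Rightarrow> 'a list \<Rightarrow> ('a \<Rightarrow> 'b)" where
  "iter_dd f [] = f"
| "iter_dd f (v # vs) = (\<lambda>x. frechet_derivative (iter_dd f vs) (at x) v)"

definition smooth_on :: "'a::euclidean_space set \<Rightarrow> ('a \<Rightarrow> 'b::real_normed_vector) \<Rightarrow> bool" where
  "smooth_on S f \<longleftrightarrow> (\<forall>vs. set vs \<subseteq> Basis \<longrightarrow> (\<forall>x\<in>S. iter_dd f vs differentiable (at x)))"

text \<open>rho = 0: the plane x3 = 0 (Euclidean); rho > 0: the round sphere of radius 1/sqrt rho
  (Euclidean); rho < 0: the upper sheet of the hyperboloid in Minkowski space R^{2,1}.\<close>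

definition sf_form :: "real \<Rightarrow> real^3 \<Rightarrow> real^3 \<Rightarrow> real" where
  "sf_form \<rho> v w = v$1 * w$1 + v$2 * w$2 + (if \<rho> < 0 then -1 else 1) * (v$3 * w$3)"

definition space_form :: "real \<Rightarrow> (real^3) set" where
  "space_form \<rho> =
     (if \<rho> = 0 then {x. x$3 = 0}
      else if \<rho> > 0 then {x. sf_form \<rho> x x = 1 / \<rho>}
      else {x. sf_form \<rho> x x = 1 / \<rho> \<and> x$3 > 0})"

text \<open>unit normal of the surface at x (with respect to sf_form)\<close>
definition sf_normal :: "real \<Rightarrow> real^3 \<Rightarrow> real^3" where
  "sf_normal \<rho> x = (if \<rho> = 0 then axis 3 1 else sqrt \<bar>\<rho>\<bar> *\<^sub>R x)"

definition det3 :: "real^3 \<Rightarrow> real^3 \<Rightarrow> real^3 \<Rightarrow> real" where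
  "det3 a b c = a$1 * (b$2 * c$3 - b$3 * c$2) - a$2 * (b$1 * c$3 - b$3 * c$1)
              + a$3 * (b$1 * c$2 - b$2 * c$1)"

definition vel :: "(real \<Rightarrow> real^3) \<Rightarrow> real \<Rightarrow> real^3" where
  "vel c s = vector_derivative c (at s)"

definition acc :: "(real \<Rightarrow> real^3) \<Rightarrow> real \<Rightarrow> real^3" where
  "acc c s = vector_derivative (vel c) (at s)"

definition speed :: "real \<Rightarrow> (real \<Rightarrow> real^3) \<Rightarrow> real \<Rightarrow> real" where
  "speed \<rho> c s = sqrt (sf_form \<rho> (vel c s) (vel c s))"

text \<open>signed geodesic curvature of a regular curve c (any parametrization) in M^2(rho):
  kappa = < c'', J c' > / |c'|^3 with J the rotation by pi/2 in the tangent plane,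
  which equals det(N, c', c'') / |c'|^3.\<close>
definition geod_curv :: "real \<Rightarrow> (real \<Rightarrow> real^3) \<Rightarrow> real \<Rightarrow> real" where
  "geod_curv \<rho> c s = det3 (sf_normal \<rho> (c s)) (vel c s) (acc c s) / (speed \<rho> c s) ^ 3"

definition Theta :: "real \<Rightarrow> real \<Rightarrow> (real \<Rightarrow> real^3) \<Rightarrow> real \<Rightarrow> real \<Rightarrow> real" where
  "Theta \<rho> \<mu> c a b = integral {a..b} (\<lambda>s. exp (\<mu> * geod_curv \<rho> c s) * speed \<rho> c s)"

definition Theta_critical :: "real \<Rightarrow> real \<Rightarrow> real set \<Rightarrow> (real \<Rightarrow> real^3) \<Rightarrow> bool" where
  "Theta_critical \<rho> \<mu> I \<gamma> \<longleftrightarrow>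
     (\<forall>(\<epsilon>::real) (\<Gamma>::real \<times> real \<Rightarrow> real^3) a b.
        \<epsilon> > 0 \<and> a \<le> b \<and> {a..b} \<subseteq> I
        \<and> smooth_on ({-\<epsilon><..<\<epsilon>} \<times> I) \<Gamma>
        \<and> (\<forall>t\<in>{-\<epsilon><..<\<epsilon>}. \<forall>s\<in>I. \<Gamma> (t, s) \<in> space_form \<rho>)
        \<and> (\<forall>t\<in>{-\<epsilon><..<\<epsilon>}. \<forall>s\<in>I. vel (\<lambda>s'. \<Gamma> (t, s')) s \<noteq> 0)
        \<and> (\<forall>s\<in>I. \<Gamma> (0, s) = \<gamma> s)
        \<and> (\<forall>t\<in>{-\<epsilon><..<\<epsilon>}. \<forall>s\<in>I - {a..b}. \<Gamma> (t, s) = \<gamma> s)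
      \<longrightarrow> ((\<lambda>t. Theta \<rho> \<mu> (\<lambda>s. \<Gamma> (t, s)) a b) has_real_derivative 0) (at 0))"

end

(* Vary gamma in the conormal direction nu along the geodesics of the space form,
     Gamma (t, s) = cos_rho (t phi s) gamma s + sin_rho (t phi s) nu s,
   with phi a flat bump supported in a window [a, b]. This stays in M^2(rho) and equals gamma
   outside the window. At t = 0 the speed varies by - kappa phi and the curvature by
   phi'' + (rho + kappa^2) phi, so the first variation of Theta_mu is the integral of
   exp (mu kappa) (mu (phi'' + (rho + kappa^2) phi) - kappa phi). Integrating by parts twice
   turns it into the integral of phi (mu P'' + (mu (rho + kappa^2) - kappa) P), P = exp (mu kappa),
   and as phi is arbitrary the fundamental lemma of the calculus of variations makes the second
   factor vanish; dividing by mu gives the equation. Gamma is smooth, hence an admissible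
   variation, because it is the value of a term in a small language of smooth functions whose
   partial derivatives are again terms. *)

theory Submission
  imports Defs "HOL-Computational_Algebra.Polynomial"
begin

section \<open>A flat bump function\<close>

fun flat_poly :: "nat \<Rightarrow> real poly" where
  "flat_poly 0 = 1"
| "flat_poly (Suc k) = [:0, 0, 1:] * (flat_poly k - pderiv (flat_poly k))"

text \<open>\<open>flat_exp k\<close> is the \<open>k\<close>-th derivative of the smooth function that is \<open>exp (-1/x)\<close>
  for \<open>x > 0\<close> and vanishes for \<open>x \<le> 0\<close>.\<close>
definition flat_exp :: "nat \<Rightarrow> real \<Rightarrow> real" where
  "flat_exp k x = (if x > 0 then poly (flat_poly k) (1 / x) * exp (- 1 / x) else 0)"

lemma tendsto_poly_div_exp_0: "((\<lambda>z::real. z * poly p z / exp z) \<longlongrightarrow> 0) at_top"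
proof -
  have "(\<lambda>z::real. z * poly p z / exp z) = (\<lambda>z. \<Sum>i\<le>degree p. coeff p i * (z ^ Suc i / exp z))"
    by (rule ext) (simp add: poly_altdef sum_distrib_left sum_divide_distrib mult_ac)
  moreover have "((\<lambda>z::real. \<Sum>i\<le>degree p. coeff p i * (z ^ Suc i / exp z))
      \<longlongrightarrow> (\<Sum>i\<le>degree p. coeff p i * 0)) at_top"
    by (intro tendsto_sum tendsto_mult tendsto_const tendsto_power_div_exp_0)
  ultimately show ?thesis by simp
qed

lemma has_real_derivative_flat_exp_at_0: "(flat_exp k has_real_derivative 0) (at 0)"
proof -
  let ?q = "\<lambda>y. (flat_exp k y - flat_exp k 0) / (y - 0)"
  have "\<forall>\<^sub>F y in at_left 0. 0 = ?q y"
    unfolding eventually_at_left_field by (rule exI[of _ "-1"]) (auto simp: flat_exp_def)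
  then have left: "(?q \<longlongrightarrow> 0) (at_left 0)"
    by (rule Lim_transform_eventually[OF tendsto_const])
  have "\<forall>\<^sub>F z in at_top. z * poly (flat_poly k) z / exp z = ?q (inverse z)"
    unfolding eventually_at_top_linorder
    by (rule exI[of _ 1]) (auto simp: flat_exp_def field_simps exp_minus)
  then have "((\<lambda>z. ?q (inverse z)) \<longlongrightarrow> 0) at_top"
    by (rule Lim_transform_eventually[OF tendsto_poly_div_exp_0])
  then have right: "(?q \<longlongrightarrow> 0) (at_right 0)"
    unfolding filterlim_at_right_to_top by simp
  have "(?q \<longlongrightarrow> 0) (at 0)"
    using left right by (rule filterlim_split_at)
  then show ?thesis by (simp add: has_field_derivative_iff)
qed

lemma has_real_derivative_flat_exp: "(flat_exp k has_real_derivative flat_exp (Suc k) x) (at x)"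
proof -
  consider "x < 0" | "x = 0" | "x > 0" by linarith
  then show ?thesis
  proof cases
    case 1
    have "((\<lambda>x. 0) has_real_derivative 0) (at x)" by simp
    then have "(flat_exp k has_real_derivative 0) (at x)"
      by (rule has_field_derivative_transform_within_open[of _ _ _ "{..<0}"])
         (use 1 in \<open>auto simp: flat_exp_def\<close>)
    then show ?thesis using 1 by (simp add: flat_exp_def)
  next
    case 2
    then show ?thesis using has_real_derivative_flat_exp_at_0 by (simp add: flat_exp_def)
  next
    case 3
    let ?p = "flat_poly k"
    have d_inv: "((\<lambda>x. 1 / x) has_real_derivative - 1 / x\<^sup>2) (at x)"
      using 3 DERIV_inverse[of x] by (simp add: inverse_eq_divide power2_eq_square)
    have "((\<lambda>x. poly ?p (1 / x) * exp (- 1 / x)) has_real_derivative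
        poly (pderiv ?p) (1 / x) * (- 1 / x\<^sup>2) * exp (- 1 / x)
        + poly ?p (1 / x) * (exp (- 1 / x) * (1 / x\<^sup>2))) (at x)"
      using DERIV_mult[OF DERIV_chain2[OF poly_DERIV[of ?p] d_inv]
          DERIV_chain2[OF DERIV_exp DERIV_minus[OF d_inv]]]
      by (simp add: mult_ac)
    then have "(flat_exp k has_real_derivative
        poly (pderiv ?p) (1 / x) * (- 1 / x\<^sup>2) * exp (- 1 / x)
        + poly ?p (1 / x) * (exp (- 1 / x) * (1 / x\<^sup>2))) (at x)"
      by (rule has_field_derivative_transform_within_open[of _ _ _ "{0<..}"])
         (use 3 in \<open>auto simp: flat_exp_def\<close>)
    moreover have "poly (pderiv ?p) (1 / x) * (- 1 / x\<^sup>2) * exp (- 1 / x)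
        + poly ?p (1 / x) * (exp (- 1 / x) * (1 / x\<^sup>2)) = flat_exp (Suc k) x"
      using 3 by (simp add: flat_exp_def algebra_simps power2_eq_square divide_simps)
    ultimately show ?thesis by simp
  qed
qed

lemma flat_exp_0_pos: "x > 0 \<Longrightarrow> flat_exp 0 x > 0"
  by (simp add: flat_exp_def)

lemma flat_exp_0_nonneg: "flat_exp 0 x \<ge> 0"
  by (simp add: flat_exp_def)

lemma flat_exp_eq_0: "x \<le> 0 \<Longrightarrow> flat_exp k x = 0"
  by (simp add: flat_exp_def)

definition bump_on :: "real \<Rightarrow> real \<Rightarrow> real \<Rightarrow> real" where
  "bump_on a b s = flat_exp 0 (s - a) * flat_exp 0 (b - s)"

lemma bump_on_eq_0: "s \<le> a \<or> s \<ge> b \<Longrightarrow> bump_on a b s = 0"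
  by (auto simp: bump_on_def flat_exp_eq_0)

lemma bump_on_pos: "a < s \<Longrightarrow> s < b \<Longrightarrow> bump_on a b s > 0"
  by (simp add: bump_on_def flat_exp_0_pos)

lemma bump_on_nonneg: "bump_on a b s \<ge> 0"
  by (simp add: bump_on_def flat_exp_0_nonneg)

lemma continuous_on_bump_on [continuous_intros]: "continuous_on S (bump_on a b)"
proof -
  have "isCont (flat_exp 0) x" for x
    using has_real_derivative_flat_exp by (rule DERIV_isCont)
  then show ?thesis
    unfolding bump_on_def by (intro continuous_at_imp_continuous_on ballI continuous_intros)
       (auto intro: continuous_at_compose[unfolded o_def])
qed

lemma has_real_derivative_eq_0_if_constant_on:
  assumes "open S" "s \<in> S" "(f has_real_derivative f') (at s)" "\<forall>s\<in>S. f s = c"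
  shows "f' = 0"
proof -
  have "((\<lambda>_. c) has_real_derivative 0) (at s)" by simp
  then have "(f has_real_derivative 0) (at s)"
    by (rule has_field_derivative_transform_within_open[OF _ assms(1,2)]) (use assms(4) in auto)
  then show ?thesis using assms(3) DERIV_unique by blast
qed

lemma has_derivative_vec_lambda:
  fixes f :: "'n::finite \<Rightarrow> 'a::real_normed_vector \<Rightarrow> real"
  assumes "\<And>n. (f n has_derivative f' n) (at x)"
  shows "((\<lambda>x. \<chi> n. f n x) has_derivative (\<lambda>h. \<chi> n. f' n h)) (at x)"
  using assms
  by (subst has_derivative_componentwise_within)
     (auto simp: Basis_vec_def cart_eq_inner_axis[symmetric] axis_def inner_vec_def)

lemma has_real_derivative_vec_nth:
  assumes "(X has_vector_derivative X') (at s)"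
  shows "((\<lambda>s. X s $ n) has_real_derivative X' $ n) (at s)"
proof -
  have "((\<lambda>s. X s $ n) has_derivative (\<lambda>h. (h *\<^sub>R X') $ n)) (at s)"
    using bounded_linear.has_derivative[OF bounded_linear_vec_nth
        assms[unfolded has_vector_derivative_def]] .
  moreover have "(\<lambda>h. (h *\<^sub>R X') $ n) = (*) (X' $ n)" by auto
  ultimately show ?thesis by (simp add: has_field_derivative_def)
qed

lemma has_vector_derivative_vec_lambda:
  fixes X :: "real \<Rightarrow> real^'n::finite"
  assumes "\<And>n. ((\<lambda>s. X s $ n) has_real_derivative X' $ n) (at s)"
  shows "(X has_vector_derivative X') (at s)"
proof -
  have "(\<lambda>h. h * X' $ n) = (*) (X' $ n)" for n by auto
  then have "((\<lambda>x. \<chi> n. X x $ n) has_derivative (\<lambda>h. \<chi> n. h * X' $ n)) (at s)"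
    using assms by (intro has_derivative_vec_lambda) (simp add: has_field_derivative_def)
  moreover have "(\<lambda>h. \<chi> n. h * X' $ n) = (\<lambda>h. h *\<^sub>R X')" by (auto simp: vec_eq_iff)
  ultimately show ?thesis by (simp add: has_vector_derivative_def)
qed

lemma positive_near_slice:
  fixes f :: "real \<times> real \<Rightarrow> real"
  assumes cont: "continuous_on ({-1..1} \<times> {a..b}) f" and "c > 0"
    and slice: "\<forall>s\<in>{a..b}. f (0, s) \<ge> c"
  shows "\<exists>e>0. \<forall>t s. \<bar>t\<bar> < e \<longrightarrow> s \<in> {a..b} \<longrightarrow> f (t, s) > 0"
proof -
  have "compact ({-1..1::real} \<times> {a..b::real})" by (auto intro!: compact_Times)
  then have "uniformly_continuous_on ({-1..1} \<times> {a..b}) f"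
    by (rule compact_uniformly_continuous[OF cont])
  then obtain d where d: "d > 0" "\<And>x x'. x \<in> {-1..1} \<times> {a..b} \<Longrightarrow> x' \<in> {-1..1} \<times> {a..b}
      \<Longrightarrow> dist x' x < d \<Longrightarrow> dist (f x') (f x) < c"
    unfolding uniformly_continuous_on_def using \<open>c > 0\<close> by metis
  show ?thesis
  proof (intro exI[of _ "min d 1"] conjI allI impI)
    fix t s assume t: "\<bar>t\<bar> < min d 1" and s: "s \<in> {a..b}"
    have "dist (t, s) (0, s) < d" using t by (simp add: dist_Pair_Pair dist_real_def)
    then have "dist (f (t, s)) (f (0, s)) < c" using t s by (intro d(2)) auto
    moreover have "f (0, s) \<ge> c" using slice s by blast
    ultimately show "f (t, s) > 0" by (simp add: dist_real_def)
  qed (use d in simp)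
qed

lemma continuous_nonvanishing_keeps_sign:
  fixes f :: "real \<Rightarrow> real"
  assumes "continuous_on UNIV f" "\<And>t. f t \<noteq> 0" "f 0 > 0"
  shows "f t > 0"
proof (rule ccontr)
  assume "\<not> f t > 0"
  then have "f t \<le> 0" by simp
  then have "\<exists>x. f x = 0"
    using IVT2'[of f t 0 0] IVT'[of f t 0 0] assms(3) continuous_on_subset[OF assms(1)]
    by (cases "t \<le> 0") auto
  then show False using assms(2) by blast
qed

lemma has_integral_Lagrange_identity:
  assumes "a \<le> b"
    and f: "\<And>s. s \<in> {a..b} \<Longrightarrow> (f has_real_derivative f1 s) (at s)"
      "\<And>s. s \<in> {a..b} \<Longrightarrow> (f1 has_real_derivative f2 s) (at s)"
    and g: "\<And>s. s \<in> {a..b} \<Longrightarrow> (g has_real_derivative g1 s) (at s)"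
      "\<And>s. s \<in> {a..b} \<Longrightarrow> (g1 has_real_derivative g2 s) (at s)"
  shows "((\<lambda>s. f s * g2 s - f2 s * g s) has_integral
           (f b * g1 b - f1 b * g b) - (f a * g1 a - f1 a * g a)) {a..b}"
proof (rule fundamental_theorem_of_calculus[OF assms(1)])
  fix s assume s: "s \<in> {a..b}"
  have "((\<lambda>s. f s * g1 s - f1 s * g s) has_real_derivative
      (f1 s * g1 s + g2 s * f s) - (f2 s * g s + g1 s * f1 s)) (at s)"
    by (intro derivative_intros f[OF s] g[OF s])
  then show "((\<lambda>s. f s * g1 s - f1 s * g s) has_vector_derivative f s * g2 s - f2 s * g s)
      (at s within {a..b})"
    by (auto simp: has_real_derivative_iff_has_vector_derivative algebra_simps
        intro: has_vector_derivative_at_within)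
qed

lemma sign_persists_near:
  fixes f :: "real \<Rightarrow> real"
  assumes "open I" "continuous_on I f" "s0 \<in> I" "f s0 \<noteq> 0"
  shows "\<exists>r>0. {s0 - r..s0 + r} \<subseteq> I \<and> (\<forall>s\<in>{s0 - r..s0 + r}. sgn (f s0) * f s > 0)"
proof -
  have "isCont f s0" using assms(1-3) continuous_on_eq_continuous_at by blast
  then obtain d where d: "d > 0" "\<And>s. dist s s0 < d \<Longrightarrow> dist (f s) (f s0) < \<bar>f s0\<bar>"
    unfolding continuous_at_eps_delta using assms(4) by (meson zero_less_abs_iff)
  obtain e where e: "e > 0" "ball s0 e \<subseteq> I" using assms(1,3) open_contains_ball by blast
  define r where "r = min d e / 2"
  have r: "r > 0" "r < d" "r < e" using d e by (auto simp: r_def)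
  have "{s0 - r..s0 + r} \<subseteq> I" using r e(2) by (force simp: dist_real_def)
  moreover have "sgn (f s0) * f s > 0" if "s \<in> {s0 - r..s0 + r}" for s
  proof -
    have "dist s s0 < d" using that r by (auto simp: dist_real_def)
    then have "\<bar>f s - f s0\<bar> < \<bar>f s0\<bar>" using d(2) by (simp add: dist_real_def)
    then show ?thesis by (auto simp: sgn_if)
  qed
  ultimately show ?thesis using r(1) by blast
qed

lemma fundamental_lemma_calculus_of_variations:
  assumes "open I" and cont: "continuous_on I f"
    and weak: "\<And>a b. a < b \<Longrightarrow> {a..b} \<subseteq> I \<Longrightarrow> ((\<lambda>s. bump_on a b s * f s) has_integral 0) {a..b}"
    and "s0 \<in> I"
  shows "f s0 = 0"
proof (rule ccontr)
  assume "f s0 \<noteq> 0"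
  then obtain r where r: "r > 0" and sub: "{s0 - r..s0 + r} \<subseteq> I"
    and same_sign: "\<And>s. s \<in> {s0 - r..s0 + r} \<Longrightarrow> sgn (f s0) * f s > 0"
    using sign_persists_near[OF assms(1,2,4)] by blast
  let ?g = "\<lambda>s. bump_on (s0 - r) (s0 + r) s * (sgn (f s0) * f s)"
  have "?g s0 = 0"
  proof (rule has_integral_0_cbox_imp_0[of "s0 - r" "s0 + r" ?g])
    show "(?g has_integral 0) (cbox (s0 - r) (s0 + r))"
      using has_integral_mult_right[OF weak[OF _ sub], of "sgn (f s0)"] r by (simp add: mult_ac)
    show "continuous_on (cbox (s0 - r) (s0 + r)) ?g"
      using sub by (intro continuous_intros continuous_on_subset[OF cont]) auto
    show "0 \<le> ?g s" if "s \<in> box (s0 - r) (s0 + r)" for s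
      using same_sign[of s] that bump_on_nonneg[of "s0 - r" "s0 + r" s] by simp
  qed (use r in auto)
  moreover have "bump_on (s0 - r) (s0 + r) s0 > 0" using r by (intro bump_on_pos) auto
  ultimately show False using same_sign[of s0] r by auto
qed

section \<open>Smooth functions given by terms\<close>

text \<open>Terms denote functions of \<open>(t, s)\<close>. \<open>Base i k\<close> stands for the \<open>k\<close>-th derivative of the
  \<open>i\<close>-th given function of \<open>s\<close>, and \<open>App j k e\<close> for the \<open>k\<close>-th derivative of the \<open>j\<close>-th given
  function of one variable, applied to \<open>e\<close>. Since derivatives stay symbolic, all iterated partial
  derivatives of a term are again terms.\<close>
datatype ('i, 'j) stm =
    Cst real | Tvar | Svar | Base 'i nat | App 'j nat "('i, 'j) stm"
  | Add "('i, 'j) stm" "('i, 'j) stm" | Mul "('i, 'j) stm" "('i, 'j) stm"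

fun stm_eval :: "('i \<Rightarrow> nat \<Rightarrow> real \<Rightarrow> real) \<Rightarrow> ('j \<Rightarrow> nat \<Rightarrow> real \<Rightarrow> real) \<Rightarrow> ('i, 'j) stm
    \<Rightarrow> real \<times> real \<Rightarrow> real" where
  "stm_eval B H (Cst c) x = c"
| "stm_eval B H Tvar x = fst x"
| "stm_eval B H Svar x = snd x"
| "stm_eval B H (Base i k) x = B i k (snd x)"
| "stm_eval B H (App j k e) x = H j k (stm_eval B H e x)"
| "stm_eval B H (Add e e') x = stm_eval B H e x + stm_eval B H e' x"
| "stm_eval B H (Mul e e') x = stm_eval B H e x * stm_eval B H e' x"

fun stm_dt :: "('i, 'j) stm \<Rightarrow> ('i, 'j) stm" where
  "stm_dt (Cst c) = Cst 0"
| "stm_dt Tvar = Cst 1"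
| "stm_dt Svar = Cst 0"
| "stm_dt (Base i k) = Cst 0"
| "stm_dt (App j k e) = Mul (App j (Suc k) e) (stm_dt e)"
| "stm_dt (Add e e') = Add (stm_dt e) (stm_dt e')"
| "stm_dt (Mul e e') = Add (Mul (stm_dt e) e') (Mul e (stm_dt e'))"

fun stm_ds :: "('i, 'j) stm \<Rightarrow> ('i, 'j) stm" where
  "stm_ds (Cst c) = Cst 0"
| "stm_ds Tvar = Cst 0"
| "stm_ds Svar = Cst 1"
| "stm_ds (Base i k) = Base i (Suc k)"
| "stm_ds (App j k e) = Mul (App j (Suc k) e) (stm_ds e)"
| "stm_ds (Add e e') = Add (stm_ds e) (stm_ds e')"
| "stm_ds (Mul e e') = Add (Mul (stm_ds e) e') (Mul e (stm_ds e'))"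

lemma stm_eval_dt_ds: "stm_eval B H (stm_dt (stm_ds e)) x = stm_eval B H (stm_ds (stm_dt e)) x"
  by (induction e) (auto simp: algebra_simps)

fun stm_free_of_t :: "('i, 'j) stm \<Rightarrow> bool" where
  "stm_free_of_t Tvar = False"
| "stm_free_of_t (App j k e) = stm_free_of_t e"
| "stm_free_of_t (Add e e') = (stm_free_of_t e \<and> stm_free_of_t e')"
| "stm_free_of_t (Mul e e') = (stm_free_of_t e \<and> stm_free_of_t e')"
| "stm_free_of_t _ = True"

lemma stm_eval_dt_free_of_t: "stm_free_of_t e \<Longrightarrow> stm_eval B H (stm_dt e) x = 0"
  by (induction e) auto

definition stm_vec :: "('i \<Rightarrow> nat \<Rightarrow> real \<Rightarrow> real) \<Rightarrow> ('j \<Rightarrow> nat \<Rightarrow> real \<Rightarrow> real)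
    \<Rightarrow> ('n::finite \<Rightarrow> ('i, 'j) stm) \<Rightarrow> real \<times> real \<Rightarrow> real^'n" where
  "stm_vec B H E x = (\<chi> n. stm_eval B H (E n) x)"

lemma stm_vec_nth [simp]: "stm_vec B H E x $ n = stm_eval B H (E n) x"
  by (simp add: stm_vec_def)

definition stm_dir :: "real \<times> real \<Rightarrow> ('i, 'j) stm \<Rightarrow> ('i, 'j) stm" where
  "stm_dir v e = Add (Mul (Cst (fst v)) (stm_dt e)) (Mul (Cst (snd v)) (stm_ds e))"

fun stm_dirs :: "(real \<times> real) list \<Rightarrow> ('i, 'j) stm \<Rightarrow> ('i, 'j) stm" where
  "stm_dirs [] e = e"
| "stm_dirs (v # vs) e = stm_dir v (stm_dirs vs e)"

definition derivative_tower_on :: "real set \<Rightarrow> ('i \<Rightarrow> nat \<Rightarrow> real \<Rightarrow> real) \<Rightarrow> bool" where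
  "derivative_tower_on S F \<longleftrightarrow> (\<forall>i k. \<forall>s\<in>S. (F i k has_real_derivative F i (Suc k) s) (at s))"

locale smooth_terms =
  fixes I :: "real set"
    and B :: "'i \<Rightarrow> nat \<Rightarrow> real \<Rightarrow> real"
    and H :: "'j \<Rightarrow> nat \<Rightarrow> real \<Rightarrow> real"
  assumes open_I: "open I"
    and tower_B: "derivative_tower_on I B"
    and tower_H: "derivative_tower_on UNIV H"
begin

lemma has_derivative_stm_eval:
  assumes "snd x \<in> I"
  shows "(stm_eval B H e has_derivative
      (\<lambda>h. fst h * stm_eval B H (stm_dt e) x + snd h * stm_eval B H (stm_ds e) x)) (at x)"
proof (induction e)
  case (Base i k)
  have "(B i k has_real_derivative B i (Suc k) (snd x)) (at (snd x))"
    using tower_B assms unfolding derivative_tower_on_def by blast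
  from has_derivative_compose[OF has_derivative_snd[OF has_derivative_ident]
      this[unfolded has_field_derivative_def]]
  show ?case by (simp add: o_def mult.commute)
next
  case (App j k e)
  have "(H j k has_real_derivative H j (Suc k) (stm_eval B H e x)) (at (stm_eval B H e x))"
    using tower_H unfolding derivative_tower_on_def by blast
  from has_derivative_compose[OF App this[unfolded has_field_derivative_def]]
  show ?case by (simp add: o_def algebra_simps)
next
  case (Add e e')
  then show ?case by (auto intro!: derivative_eq_intros simp: algebra_simps)
next
  case (Mul e e')
  then show ?case by (auto intro!: derivative_eq_intros simp: algebra_simps)
qed (auto intro!: derivative_eq_intros)

lemma has_derivative_stm_vec:
  assumes "snd x \<in> I"
  shows "(stm_vec B H E has_derivative (\<lambda>h. \<chi> n. fst h * stm_eval B H (stm_dt (E n)) x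
      + snd h * stm_eval B H (stm_ds (E n)) x)) (at x)"
  unfolding stm_vec_def by (intro has_derivative_vec_lambda has_derivative_stm_eval assms)

lemma iter_dd_stm_vec:
  "snd x \<in> I \<Longrightarrow> iter_dd (stm_vec B H E) vs x = stm_vec B H (\<lambda>n. stm_dirs vs (E n)) x"
proof (induction vs arbitrary: x)
  case (Cons v vs)
  let ?G = "stm_vec B H (\<lambda>n. stm_dirs vs (E n))"
  note dG = has_derivative_stm_vec[OF Cons.prems, of "\<lambda>n. stm_dirs vs (E n)"]
  have U: "open (UNIV \<times> I)" using open_I by (simp add: open_Times)
  have eq: "\<And>y. y \<in> UNIV \<times> I \<Longrightarrow> ?G y = iter_dd (stm_vec B H E) vs y"
    using Cons.IH by auto
  have "frechet_derivative (iter_dd (stm_vec B H E) vs) (at x) = frechet_derivative ?G (at x)"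
    by (rule sym, rule frechet_derivative_transform_within_open[OF _ U _ eq])
       (use dG Cons.prems in \<open>auto simp: differentiable_def mem_Times_iff\<close>)
  also have "\<dots> = (\<lambda>h. \<chi> n. fst h * stm_eval B H (stm_dt (stm_dirs vs (E n))) x
      + snd h * stm_eval B H (stm_ds (stm_dirs vs (E n))) x)"
    by (rule frechet_derivative_at[OF dG, symmetric])
  finally show ?case
    by (simp add: stm_dir_def vec_eq_iff)
qed simp

lemma smooth_on_stm_vec:
  assumes "S \<subseteq> UNIV \<times> I"
  shows "smooth_on S (stm_vec B H E)"
  unfolding smooth_on_def
proof (intro allI impI ballI)
  fix vs :: "(real \<times> real) list" and x assume "x \<in> S"
  then have x: "snd x \<in> I" using assms by auto
  obtain D where dG: "(stm_vec B H (\<lambda>n. stm_dirs vs (E n)) has_derivative D) (at x)"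
    using has_derivative_stm_vec[OF x] by blast
  have "open (UNIV \<times> I)" using open_I by (simp add: open_Times)
  then have "(iter_dd (stm_vec B H E) vs has_derivative D) (at x)"
    by (rule has_derivative_transform_within_open[OF dG])
       (use x in \<open>auto simp: mem_Times_iff iter_dd_stm_vec\<close>)
  then show "iter_dd (stm_vec B H E) vs differentiable (at x)"
    by (auto simp: differentiable_def)
qed

lemma has_real_derivative_stm_eval_s:
  assumes "s \<in> I"
  shows "((\<lambda>s. stm_eval B H e (t, s)) has_real_derivative stm_eval B H (stm_ds e) (t, s)) (at s)"
proof -
  have "((\<lambda>s. (t, s)) has_derivative (\<lambda>h. (0, h))) (at s)"
    by (auto intro!: derivative_eq_intros)
  from has_derivative_compose[OF this has_derivative_stm_eval] assms
  show ?thesis by (simp add: has_field_derivative_def o_def mult_commute_abs)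
qed

lemma has_real_derivative_stm_eval_t:
  assumes "s \<in> I"
  shows "((\<lambda>t. stm_eval B H e (t, s)) has_real_derivative stm_eval B H (stm_dt e) (t, s)) (at t)"
proof -
  have "((\<lambda>t. (t, s)) has_derivative (\<lambda>h. (h, 0))) (at t)"
    by (auto intro!: derivative_eq_intros)
  from has_derivative_compose[OF this has_derivative_stm_eval] assms
  show ?thesis by (simp add: has_field_derivative_def o_def mult_commute_abs)
qed

lemma stm_eval_ds_unique:
  assumes "open J" "J \<subseteq> I" "s \<in> J"
    and "\<forall>s'\<in>J. stm_eval B H e (t, s') = f s'" and "(f has_real_derivative f') (at s)"
  shows "stm_eval B H (stm_ds e) (t, s) = f'"
proof -
  have "(f has_real_derivative stm_eval B H (stm_ds e) (t, s)) (at s)"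
    by (rule has_field_derivative_transform_within_open[OF has_real_derivative_stm_eval_s])
       (use assms in auto)
  then show ?thesis using assms(5) DERIV_unique by blast
qed

lemma has_vector_derivative_stm_vec_s:
  "s \<in> I \<Longrightarrow> ((\<lambda>s. stm_vec B H E (t, s)) has_vector_derivative
     stm_vec B H (\<lambda>n. stm_ds (E n)) (t, s)) (at s)"
  by (rule has_vector_derivative_vec_lambda) (simp add: has_real_derivative_stm_eval_s)

lemma has_vector_derivative_stm_vec_t:
  "s \<in> I \<Longrightarrow> ((\<lambda>t. stm_vec B H E (t, s)) has_vector_derivative
     stm_vec B H (\<lambda>n. stm_dt (E n)) (t, s)) (at t)"
  by (rule has_vector_derivative_vec_lambda) (simp add: has_real_derivative_stm_eval_t)

lemma continuous_on_stm_eval: "continuous_on (UNIV \<times> I) (stm_eval B H e)"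
proof (rule continuous_at_imp_continuous_on, rule ballI)
  fix x :: "real \<times> real" assume "x \<in> UNIV \<times> I"
  then show "isCont (stm_eval B H e) x"
    using has_derivative_stm_eval[of x e] by (auto intro: has_derivative_continuous)
qed

lemma continuous_on_stm_vec: "continuous_on (UNIV \<times> I) (stm_vec B H E)"
  unfolding stm_vec_def by (intro continuous_on_vec_lambda continuous_on_stm_eval)

end

definition sf_sign :: "real \<Rightarrow> real" where
  "sf_sign \<rho> = (if \<rho> < 0 then -1 else 1)"

definition normal_scale :: "real \<Rightarrow> real" where
  "normal_scale \<rho> = (if \<rho> = 0 then 0 else sqrt \<bar>\<rho>\<bar>)"

definition sf_cross :: "real \<Rightarrow> real^3 \<Rightarrow> real^3 \<Rightarrow> real^3" where
  "sf_cross \<rho> a b = vector [a$2 * b$3 - a$3 * b$2, a$3 * b$1 - a$1 * b$3,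
     sf_sign \<rho> * (a$1 * b$2 - a$2 * b$1)]"

lemma sf_sign_sq: "sf_sign \<rho> * sf_sign \<rho> = 1"
  by (simp add: sf_sign_def)

lemma sf_form_eq: "sf_form \<rho> v w = v$1 * w$1 + v$2 * w$2 + sf_sign \<rho> * (v$3 * w$3)"
  by (simp add: sf_form_def sf_sign_def)

lemma normal_scale_sq: "normal_scale \<rho> * normal_scale \<rho> = \<bar>\<rho>\<bar>"
  by (simp add: normal_scale_def)

lemma sf_sign_normal_scale: "normal_scale \<rho> * (sf_sign \<rho> * normal_scale \<rho>) = \<rho>"
  using normal_scale_sq[of \<rho>] by (auto simp: sf_sign_def)

lemma sf_normal_eq: "\<rho> \<noteq> 0 \<Longrightarrow> sf_normal \<rho> x = normal_scale \<rho> *\<^sub>R x"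
  by (simp add: sf_normal_def normal_scale_def)

lemma vec3_eq_iff: "(x::real^3) = y \<longleftrightarrow> x$1 = y$1 \<and> x$2 = y$2 \<and> x$3 = y$3"
  by (auto simp: vec_eq_iff forall_3)

lemma sf_form_sym: "sf_form \<rho> v w = sf_form \<rho> w v"
  by (simp add: sf_form_def algebra_simps)

lemma sf_form_bilinear:
  "sf_form \<rho> (a + b) w = sf_form \<rho> a w + sf_form \<rho> b w"
  "sf_form \<rho> w (a + b) = sf_form \<rho> w a + sf_form \<rho> w b"
  "sf_form \<rho> (a - b) w = sf_form \<rho> a w - sf_form \<rho> b w"
  "sf_form \<rho> w (a - b) = sf_form \<rho> w a - sf_form \<rho> w b"
  "sf_form \<rho> (c *\<^sub>R a) w = c * sf_form \<rho> a w"
  "sf_form \<rho> w (c *\<^sub>R a) = c * sf_form \<rho> w a"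
  "sf_form \<rho> (- a) w = - sf_form \<rho> a w"
  "sf_form \<rho> w (- a) = - sf_form \<rho> w a"
  by (simp_all add: sf_form_def algebra_simps)

lemma det3_trilinear:
  "det3 (a + b) c d = det3 a c d + det3 b c d"
  "det3 c (a + b) d = det3 c a d + det3 c b d"
  "det3 c d (a + b) = det3 c d a + det3 c d b"
  "det3 (a - b) c d = det3 a c d - det3 b c d"
  "det3 c (a - b) d = det3 c a d - det3 c b d"
  "det3 c d (a - b) = det3 c d a - det3 c d b"
  "det3 (k *\<^sub>R a) c d = k * det3 a c d"
  "det3 c (k *\<^sub>R a) d = k * det3 c a d"
  "det3 c d (k *\<^sub>R a) = k * det3 c d a"
  "det3 (- a) c d = - det3 a c d"
  "det3 c (- a) d = - det3 c a d"
  "det3 c d (- a) = - det3 c d a"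
  by (simp_all add: det3_def algebra_simps)

lemma det3_alternating: "det3 a a c = 0" "det3 a c a = 0" "det3 c a a = 0"
  by (simp_all add: det3_def algebra_simps)

lemma det3_swap_23: "det3 a b c = - det3 a c b"
  by (simp add: det3_def algebra_simps)

lemma det3_cyclic: "det3 a b c = det3 b c a"
  by (simp add: det3_def algebra_simps)

lemma sf_cross_linear:
  "sf_cross \<rho> a a = 0"
  "sf_cross \<rho> a (b - c) = sf_cross \<rho> a b - sf_cross \<rho> a c"
  "sf_cross \<rho> (k *\<^sub>R a) b = k *\<^sub>R sf_cross \<rho> a b"
  "sf_cross \<rho> a (k *\<^sub>R b) = k *\<^sub>R sf_cross \<rho> a b"
  by (simp_all add: sf_cross_def vec3_eq_iff algebra_simps)

lemma sf_form_sf_cross: "sf_form \<rho> v (sf_cross \<rho> n t) = det3 n t v"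
  using sf_sign_sq[of \<rho>] unfolding sf_form_eq sf_cross_def det3_def by simp algebra

locale sf_frame =
  fixes \<rho> :: real and n t :: "real^3"
  assumes normal_normal: "sf_form \<rho> n n = sf_sign \<rho>"
    and normal_tangent: "sf_form \<rho> n t = 0"
    and tangent_tangent: "sf_form \<rho> t t = 1"
begin

lemma cross_cross: "sf_form \<rho> (sf_cross \<rho> n t) (sf_cross \<rho> n t) = 1"
  using sf_sign_sq[of \<rho>] normal_normal normal_tangent tangent_tangent
  unfolding sf_form_eq sf_cross_def by simp algebra

lemma cross_normal: "sf_form \<rho> (sf_cross \<rho> n t) n = 0"
  using sf_sign_sq[of \<rho>] unfolding sf_form_eq sf_cross_def by simp algebra

lemma cross_tangent: "sf_form \<rho> (sf_cross \<rho> n t) t = 0"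
  using sf_sign_sq[of \<rho>] unfolding sf_form_eq sf_cross_def by simp algebra

lemma frame_expansion:
  "v = (sf_sign \<rho> * sf_form \<rho> v n) *\<^sub>R n + sf_form \<rho> v t *\<^sub>R t
     + sf_form \<rho> v (sf_cross \<rho> n t) *\<^sub>R sf_cross \<rho> n t"
  using sf_sign_sq[of \<rho>] normal_normal normal_tangent tangent_tangent
  unfolding sf_form_eq sf_cross_def vec3_eq_iff by simp algebra

lemma cross_normal_cross: "sf_cross \<rho> n (sf_cross \<rho> n t) = - t"
  using sf_sign_sq[of \<rho>] normal_normal normal_tangent tangent_tangent
  unfolding sf_form_eq sf_cross_def vec3_eq_iff by simp algebra

lemma det3_frame: "det3 n t (sf_cross \<rho> n t) = 1"
  using cross_cross sf_form_sf_cross by simp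

end

lemma has_real_derivative_sf_form:
  assumes "(X has_vector_derivative X') (at s)" "(Y has_vector_derivative Y') (at s)"
  shows "((\<lambda>s. sf_form \<rho> (X s) (Y s)) has_real_derivative
           sf_form \<rho> X' (Y s) + sf_form \<rho> (X s) Y') (at s)"
  unfolding sf_form_def
  using has_real_derivative_vec_nth[OF assms(1)] has_real_derivative_vec_nth[OF assms(2)]
  by (auto intro!: derivative_eq_intros simp: algebra_simps)

lemma has_real_derivative_det3:
  assumes "(X has_vector_derivative X') (at s)" "(Y has_vector_derivative Y') (at s)"
    "(Z has_vector_derivative Z') (at s)"
  shows "((\<lambda>s. det3 (X s) (Y s) (Z s)) has_real_derivative
           det3 X' (Y s) (Z s) + det3 (X s) Y' (Z s) + det3 (X s) (Y s) Z') (at s)"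
  unfolding det3_def
  using has_real_derivative_vec_nth[OF assms(1)] has_real_derivative_vec_nth[OF assms(2)]
    has_real_derivative_vec_nth[OF assms(3)]
  by (auto intro!: derivative_eq_intros simp: algebra_simps)

lemma has_vector_derivative_sf_cross:
  assumes "(X has_vector_derivative X') (at s)" "(Y has_vector_derivative Y') (at s)"
  shows "((\<lambda>s. sf_cross \<rho> (X s) (Y s)) has_vector_derivative
           sf_cross \<rho> X' (Y s) + sf_cross \<rho> (X s) Y') (at s)"
proof (rule has_vector_derivative_vec_lambda)
  fix i :: 3
  show "((\<lambda>s. sf_cross \<rho> (X s) (Y s) $ i) has_real_derivative
      (sf_cross \<rho> X' (Y s) + sf_cross \<rho> (X s) Y') $ i) (at s)"
    using exhaust_3[of i]
    by (auto simp: sf_cross_def algebra_simps intro!: derivative_eq_intros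
        has_real_derivative_vec_nth[OF assms(1)] has_real_derivative_vec_nth[OF assms(2)])
qed

lemma has_vector_derivative_sf_normal:
  assumes "(X has_vector_derivative X') (at t)"
  shows "((\<lambda>t. sf_normal \<rho> (X t)) has_vector_derivative normal_scale \<rho> *\<^sub>R X') (at t)"
  using assms unfolding sf_normal_def normal_scale_def
  by (cases "\<rho> = 0") (auto intro!: derivative_eq_intros)

lemma continuous_on_sf_form [continuous_intros]:
  "continuous_on S X \<Longrightarrow> continuous_on S Y \<Longrightarrow> continuous_on S (\<lambda>x. sf_form \<rho> (X x) (Y x))"
  unfolding sf_form_def by (intro continuous_intros)

lemma continuous_on_det3 [continuous_intros]:
  "continuous_on S X \<Longrightarrow> continuous_on S Y \<Longrightarrow> continuous_on S Z
    \<Longrightarrow> continuous_on S (\<lambda>x. det3 (X x) (Y x) (Z x))"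
  unfolding det3_def by (intro continuous_intros)

lemma continuous_on_sf_normal [continuous_intros]:
  "continuous_on S X \<Longrightarrow> continuous_on S (\<lambda>x. sf_normal \<rho> (X x))"
  unfolding sf_normal_def by (cases "\<rho> = 0") (auto intro!: continuous_intros)

definition curvature_at :: "real \<Rightarrow> real^3 \<Rightarrow> real^3 \<Rightarrow> real^3 \<Rightarrow> real" where
  "curvature_at \<rho> X V A = det3 (sf_normal \<rho> X) V A / sqrt (sf_form \<rho> V V) ^ 3"

definition energy_density :: "real \<Rightarrow> real \<Rightarrow> real^3 \<Rightarrow> real^3 \<Rightarrow> real^3 \<Rightarrow> real" where
  "energy_density \<rho> \<mu> X V A = exp (\<mu> * curvature_at \<rho> X V A) * sqrt (sf_form \<rho> V V)"

lemma geod_curv_eq_curvature_at: "geod_curv \<rho> c s = curvature_at \<rho> (c s) (vel c s) (acc c s)"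
  by (simp add: geod_curv_def curvature_at_def speed_def)

lemma Theta_eq_integral_energy_density:
  "Theta \<rho> \<mu> c a b = integral {a..b} (\<lambda>s. energy_density \<rho> \<mu> (c s) (vel c s) (acc c s))"
  by (simp add: Theta_def energy_density_def geod_curv_eq_curvature_at speed_def)

definition energy_density_dt ::
    "real \<Rightarrow> real \<Rightarrow> real^3 \<Rightarrow> real^3 \<Rightarrow> real^3 \<Rightarrow> real^3 \<Rightarrow> real^3 \<Rightarrow> real^3 \<Rightarrow> real" where
  "energy_density_dt \<rho> \<mu> X V A X' V' A' =
     (let \<sigma> = sqrt (sf_form \<rho> V V); \<sigma>' = sf_form \<rho> V V' / \<sigma>;
          D = det3 (sf_normal \<rho> X) V A;
          D' = det3 (normal_scale \<rho> *\<^sub>R X') V A + det3 (sf_normal \<rho> X) V' A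
               + det3 (sf_normal \<rho> X) V A';
          \<kappa>' = D' / \<sigma> ^ 3 - 3 * D * \<sigma>' / \<sigma> ^ 4
      in exp (\<mu> * (D / \<sigma> ^ 3)) * (\<mu> * \<kappa>' * \<sigma> + \<sigma>'))"

lemma has_real_derivative_energy_density:
  assumes X: "(X has_vector_derivative X') (at t)" and V: "(V has_vector_derivative V') (at t)"
    and A: "(A has_vector_derivative A') (at t)" and pos: "sf_form \<rho> (V t) (V t) > 0"
  shows "((\<lambda>t. energy_density \<rho> \<mu> (X t) (V t) (A t)) has_real_derivative
           energy_density_dt \<rho> \<mu> (X t) (V t) (A t) X' V' A') (at t)"
proof -
  define \<sigma> where "\<sigma> t = sqrt (sf_form \<rho> (V t) (V t))" for t
  define D where "D t = det3 (sf_normal \<rho> (X t)) (V t) (A t)" for t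
  let ?\<sigma>' = "sf_form \<rho> (V t) V' / \<sigma> t"
  let ?D' = "det3 (normal_scale \<rho> *\<^sub>R X') (V t) (A t) + det3 (sf_normal \<rho> (X t)) V' (A t)
    + det3 (sf_normal \<rho> (X t)) (V t) A'"
  have \<sigma>_pos: "\<sigma> t > 0" using pos by (simp add: \<sigma>_def)
  have d\<sigma>: "(\<sigma> has_real_derivative ?\<sigma>') (at t)"
    using DERIV_chain2[OF DERIV_real_sqrt[OF pos] has_real_derivative_sf_form[OF V V]]
    by (simp add: \<sigma>_def[abs_def] sf_form_sym[of \<rho> V'] field_simps)
  have dD: "(D has_real_derivative ?D') (at t)"
    unfolding D_def[abs_def] by (rule has_real_derivative_det3[OF has_vector_derivative_sf_normal[OF X] V A])
  have d\<kappa>: "((\<lambda>t. D t / \<sigma> t ^ 3) has_real_derivative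
      ?D' / \<sigma> t ^ 3 - 3 * D t * ?\<sigma>' / \<sigma> t ^ 4) (at t)"
    using \<sigma>_pos
    by (auto intro!: derivative_eq_intros dD d\<sigma> simp: field_simps power_eq_if)
  have "((\<lambda>t. exp (\<mu> * (D t / \<sigma> t ^ 3)) * \<sigma> t) has_real_derivative
      exp (\<mu> * (D t / \<sigma> t ^ 3))
        * (\<mu> * (?D' / \<sigma> t ^ 3 - 3 * D t * ?\<sigma>' / \<sigma> t ^ 4) * \<sigma> t + ?\<sigma>')) (at t)"
    by (rule DERIV_cong[OF DERIV_mult[OF DERIV_chain2[OF DERIV_exp DERIV_cmult[OF d\<kappa>]] d\<sigma>]])
       (simp add: algebra_simps)
  then show ?thesis
    by (simp add: energy_density_def energy_density_dt_def curvature_at_def D_def \<sigma>_def Let_def)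
qed

lemma energy_density_dt_unit_speed:
  assumes "sf_form \<rho> V V = 1"
  shows "energy_density_dt \<rho> \<mu> X V A X' V' A' =
    exp (\<mu> * det3 (sf_normal \<rho> X) V A) *
      (\<mu> * (det3 (normal_scale \<rho> *\<^sub>R X') V A + det3 (sf_normal \<rho> X) V' A + det3 (sf_normal \<rho> X) V A'
         - 3 * det3 (sf_normal \<rho> X) V A * sf_form \<rho> V V') + sf_form \<rho> V V')"
  using assms by (simp add: energy_density_dt_def Let_def)

lemma continuous_on_energy_density:
  assumes "continuous_on S X" "continuous_on S V" "continuous_on S A"
    and "\<And>x. x \<in> S \<Longrightarrow> sf_form \<rho> (V x) (V x) > 0"
  shows "continuous_on S (\<lambda>x. energy_density \<rho> \<mu> (X x) (V x) (A x))"
  unfolding energy_density_def curvature_at_def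
  by (intro continuous_intros assms(1-3)) (use assms(4) in fastforce)

lemma continuous_on_energy_density_dt:
  assumes "continuous_on S X" "continuous_on S V" "continuous_on S A"
    and "continuous_on S X'" "continuous_on S V'" "continuous_on S A'"
    and "\<And>x. x \<in> S \<Longrightarrow> sf_form \<rho> (V x) (V x) > 0"
  shows "continuous_on S (\<lambda>x. energy_density_dt \<rho> \<mu> (X x) (V x) (A x) (X' x) (V' x) (A' x))"
  unfolding energy_density_dt_def Let_def
  by (intro continuous_intros assms(1-6)) (use assms(7) in fastforce)+

definition curve_deriv :: "(real \<Rightarrow> real^3) \<Rightarrow> nat \<Rightarrow> real \<Rightarrow> real^3" where
  "curve_deriv c k = iter_dd c (replicate k 1)"

locale unit_speed_curve =
  fixes \<rho> :: real and I :: "real set" and \<gamma> :: "real \<Rightarrow> real^3"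
  assumes open_I: "open I"
    and smooth: "smooth_on I \<gamma>"
    and in_space_form: "\<forall>s\<in>I. \<gamma> s \<in> space_form \<rho>"
    and unit_speed: "\<forall>s\<in>I. sf_form \<rho> (vel \<gamma> s) (vel \<gamma> s) = 1"
begin

abbreviation "D \<equiv> curve_deriv \<gamma>"

definition "N s = sf_normal \<rho> (\<gamma> s)"
definition "conormal s = sf_cross \<rho> (N s) (D 1 s)"
definition "kappa s = det3 (N s) (D 1 s) (D 2 s)"

lemma D_0: "D 0 = \<gamma>"
  by (simp add: curve_deriv_def)

lemma has_vector_derivative_D:
  assumes "s \<in> I" shows "(D k has_vector_derivative D (Suc k) s) (at s)"
proof -
  have "set (replicate k (1::real)) \<subseteq> Basis" by auto
  then have d: "D k differentiable (at s)"
    using smooth assms unfolding smooth_on_def curve_deriv_def by blast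
  have "D (Suc k) s = frechet_derivative (D k) (at s) 1"
    by (simp add: curve_deriv_def)
  also have "\<dots> = vector_derivative (D k) (at s)"
    by (simp add: frechet_derivative_eq_vector_derivative[OF d])
  finally show ?thesis using d vector_derivative_works by metis
qed

lemma has_vector_derivative_gamma: "s \<in> I \<Longrightarrow> (\<gamma> has_vector_derivative D 1 s) (at s)"
  and has_vector_derivative_D_1: "s \<in> I \<Longrightarrow> (D 1 has_vector_derivative D 2 s) (at s)"
  and has_vector_derivative_D_2: "s \<in> I \<Longrightarrow> (D 2 has_vector_derivative D 3 s) (at s)"
  using has_vector_derivative_D[of s 0] has_vector_derivative_D[of s 1]
    has_vector_derivative_D[of s 2]
  by (simp_all add: D_0 numeral_2_eq_2 numeral_3_eq_3)

lemma vel_eq: "s \<in> I \<Longrightarrow> vel \<gamma> s = D 1 s"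
  unfolding vel_def using has_vector_derivative_D[of s 0] by (simp add: D_0 vector_derivative_at)

lemma acc_eq: assumes "s \<in> I" shows "acc \<gamma> s = D 2 s"
proof -
  have "(vel \<gamma> has_vector_derivative D 2 s) (at s)"
    by (rule has_vector_derivative_transform_within_open[OF has_vector_derivative_D_1[OF assms]
          open_I assms]) (simp add: vel_eq)
  then show ?thesis unfolding acc_def by (rule vector_derivative_at)
qed

lemma tangent_unit: "s \<in> I \<Longrightarrow> sf_form \<rho> (D 1 s) (D 1 s) = 1"
  using unit_speed vel_eq by auto

lemma tangent_acc: assumes "s \<in> I" shows "sf_form \<rho> (D 1 s) (D 2 s) = 0"
proof -
  have "sf_form \<rho> (D 2 s) (D 1 s) + sf_form \<rho> (D 1 s) (D 2 s) = 0"
    by (rule has_real_derivative_eq_0_if_constant_on[OF open_I assms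
          has_real_derivative_sf_form[OF has_vector_derivative_D_1 has_vector_derivative_D_1]])
       (use assms tangent_unit in auto)
  then show ?thesis by (simp add: sf_form_sym)
qed

lemma curve_on_quadric:
  assumes "\<rho> \<noteq> 0" "s \<in> I"
  shows "sf_form \<rho> (\<gamma> s) (\<gamma> s) = 1 / \<rho>" "sf_form \<rho> (\<gamma> s) (D 1 s) = 0"
    "sf_form \<rho> (\<gamma> s) (D 2 s) = -1"
proof -
  have quadric: "\<forall>s\<in>I. sf_form \<rho> (\<gamma> s) (\<gamma> s) = 1 / \<rho>"
    using in_space_form assms(1) by (auto simp: space_form_def split: if_splits)
  then show "sf_form \<rho> (\<gamma> s) (\<gamma> s) = 1 / \<rho>" using assms by auto
  have tangent: "\<forall>s\<in>I. sf_form \<rho> (\<gamma> s) (D 1 s) = 0"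
  proof
    fix s assume s: "s \<in> I"
    have "sf_form \<rho> (D 1 s) (\<gamma> s) + sf_form \<rho> (\<gamma> s) (D 1 s) = 0"
      by (rule has_real_derivative_eq_0_if_constant_on[OF open_I s has_real_derivative_sf_form
            [OF has_vector_derivative_gamma[OF s] has_vector_derivative_gamma[OF s]] quadric])
    then show "sf_form \<rho> (\<gamma> s) (D 1 s) = 0" by (simp add: sf_form_sym)
  qed
  then show "sf_form \<rho> (\<gamma> s) (D 1 s) = 0" using assms by auto
  have "sf_form \<rho> (D 1 s) (D 1 s) + sf_form \<rho> (\<gamma> s) (D 2 s) = 0"
    by (rule has_real_derivative_eq_0_if_constant_on[OF open_I assms(2) has_real_derivative_sf_form
          [OF has_vector_derivative_gamma has_vector_derivative_D_1, OF assms(2) assms(2)] tangent])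
  then show "sf_form \<rho> (\<gamma> s) (D 2 s) = -1" using tangent_unit[OF assms(2)] by simp
qed

lemma curve_in_plane:
  assumes "\<rho> = 0" "s \<in> I"
  shows "\<gamma> s $ 3 = 0" "D 1 s $ 3 = 0" "D 2 s $ 3 = 0"
proof -
  have plane: "\<forall>s\<in>I. \<gamma> s $ 3 = 0"
    using in_space_form assms(1) by (auto simp: space_form_def)
  then show "\<gamma> s $ 3 = 0" using assms by simp
  have tangent: "D 1 s $ 3 = 0" if s: "s \<in> I" for s
    by (rule has_real_derivative_eq_0_if_constant_on[OF open_I s
          has_real_derivative_vec_nth[OF has_vector_derivative_gamma[OF s]] plane])
  then show "D 1 s $ 3 = 0" using assms by auto
  show "D 2 s $ 3 = 0"
    using has_real_derivative_eq_0_if_constant_on[OF open_I assms(2)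
        has_real_derivative_vec_nth[OF has_vector_derivative_D_1[OF assms(2)]]] tangent
    by auto
qed

lemma normal_facts:
  assumes "s \<in> I"
  shows "sf_form \<rho> (N s) (N s) = sf_sign \<rho>" "sf_form \<rho> (N s) (D 1 s) = 0"
    "sf_form \<rho> (N s) (D 2 s) = - normal_scale \<rho>"
    "\<rho> *\<^sub>R \<gamma> s = (sf_sign \<rho> * normal_scale \<rho>) *\<^sub>R N s"
proof -
  have "sf_form \<rho> (N s) (N s) = sf_sign \<rho> \<and> sf_form \<rho> (N s) (D 1 s) = 0
    \<and> sf_form \<rho> (N s) (D 2 s) = - normal_scale \<rho>
    \<and> \<rho> *\<^sub>R \<gamma> s = (sf_sign \<rho> * normal_scale \<rho>) *\<^sub>R N s"
  proof (cases "\<rho> = 0")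
    case True
    then show ?thesis
      unfolding N_def using curve_in_plane[OF True assms]
      by (simp add: sf_normal_def sf_form_def sf_sign_def normal_scale_def axis_def)
  next
    case False
    have "sf_sign \<rho> * normal_scale \<rho> * normal_scale \<rho> = \<rho>"
      using sf_sign_normal_scale[of \<rho>] by (simp add: mult_ac)
    moreover have "normal_scale \<rho> * normal_scale \<rho> / \<rho> = sf_sign \<rho>"
      using False normal_scale_sq[of \<rho>] by (auto simp: sf_sign_def)
    ultimately show ?thesis
      using curve_on_quadric[OF False assms] False
      by (simp add: N_def sf_normal_eq sf_form_bilinear mult.assoc)
  qed
  then show "sf_form \<rho> (N s) (N s) = sf_sign \<rho>" "sf_form \<rho> (N s) (D 1 s) = 0"
    "sf_form \<rho> (N s) (D 2 s) = - normal_scale \<rho>"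
    "\<rho> *\<^sub>R \<gamma> s = (sf_sign \<rho> * normal_scale \<rho>) *\<^sub>R N s"
    by auto
qed

lemma has_vector_derivative_N:
  "s \<in> I \<Longrightarrow> (N has_vector_derivative normal_scale \<rho> *\<^sub>R D 1 s) (at s)"
  unfolding N_def[abs_def]
  by (rule has_vector_derivative_sf_normal[OF has_vector_derivative_gamma])

lemma frame: "s \<in> I \<Longrightarrow> sf_frame \<rho> (N s) (D 1 s)"
  using normal_facts tangent_unit by unfold_locales auto

lemma D_2_eq:
  assumes "s \<in> I" shows "D 2 s = kappa s *\<^sub>R conormal s - (sf_sign \<rho> * normal_scale \<rho>) *\<^sub>R N s"
proof -
  interpret sf_frame \<rho> "N s" "D 1 s" using frame[OF assms] .
  show ?thesis
    using frame_expansion[of "D 2 s"] normal_facts[OF assms] tangent_acc[OF assms]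
    by (simp add: sf_form_sym[of \<rho> "D 2 s"] sf_form_sf_cross kappa_def conormal_def)
qed

lemma has_vector_derivative_conormal:
  assumes "s \<in> I" shows "(conormal has_vector_derivative - kappa s *\<^sub>R D 1 s) (at s)"
proof -
  interpret sf_frame \<rho> "N s" "D 1 s" using frame[OF assms] .
  have "(conormal has_vector_derivative
      sf_cross \<rho> (normal_scale \<rho> *\<^sub>R D 1 s) (D 1 s) + sf_cross \<rho> (N s) (D 2 s)) (at s)"
    unfolding conormal_def[abs_def]
    by (rule has_vector_derivative_sf_cross[OF has_vector_derivative_N has_vector_derivative_D_1])
       (use assms in auto)
  also have "sf_cross \<rho> (normal_scale \<rho> *\<^sub>R D 1 s) (D 1 s) + sf_cross \<rho> (N s) (D 2 s)
      = - kappa s *\<^sub>R D 1 s"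
    using D_2_eq[OF assms] cross_normal_cross by (simp add: sf_cross_linear conormal_def)
  finally show ?thesis .
qed

lemma conormal_facts:
  assumes "s \<in> I"
  shows "\<rho> \<noteq> 0 \<Longrightarrow> sf_form \<rho> (\<gamma> s) (conormal s) = 0" "\<rho> = 0 \<Longrightarrow> conormal s $ 3 = 0"
    "sf_form \<rho> (conormal s) (conormal s) = 1" "sf_form \<rho> (D 1 s) (conormal s) = 0"
    "det3 (N s) (D 1 s) (conormal s) = 1"
proof -
  interpret sf_frame \<rho> "N s" "D 1 s" using frame[OF assms] .
  show "sf_form \<rho> (conormal s) (conormal s) = 1" using cross_cross by (simp add: conormal_def)
  show "sf_form \<rho> (D 1 s) (conormal s) = 0" using cross_tangent by (simp add: conormal_def sf_form_sym)
  show "det3 (N s) (D 1 s) (conormal s) = 1" using det3_frame by (simp add: conormal_def)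
  show "\<rho> = 0 \<Longrightarrow> conormal s $ 3 = 0"
    unfolding conormal_def N_def by (simp add: sf_cross_def sf_normal_def axis_def)
  assume "\<rho> \<noteq> 0"
  then show "sf_form \<rho> (\<gamma> s) (conormal s) = 0"
    using cross_normal normal_scale_sq[of \<rho>]
    by (auto simp: conormal_def sf_form_sym N_def sf_normal_eq sf_form_bilinear)
qed

lemma geod_curv_eq_kappa: "s \<in> I \<Longrightarrow> geod_curv \<rho> \<gamma> s = kappa s"
  using tangent_unit
  by (simp add: geod_curv_def speed_def vel_eq acc_eq kappa_def N_def)

end

definition sin_sf :: "real \<Rightarrow> real \<Rightarrow> real" where
  "sin_sf \<rho> u = (if \<rho> > 0 then sin (sqrt \<rho> * u) / sqrt \<rho>
     else if \<rho> < 0 then sinh (sqrt (- \<rho>) * u) / sqrt (- \<rho>) else u)"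

definition cos_sf :: "real \<Rightarrow> real \<Rightarrow> real" where
  "cos_sf \<rho> u = (if \<rho> > 0 then cos (sqrt \<rho> * u) else if \<rho> < 0 then cosh (sqrt (- \<rho>) * u) else 1)"

lemma sin_sf_0 [simp]: "sin_sf \<rho> 0 = 0" and cos_sf_0 [simp]: "cos_sf \<rho> 0 = 1"
  by (simp_all add: sin_sf_def cos_sf_def)

lemma has_real_derivative_sin_sf: "(sin_sf \<rho> has_real_derivative cos_sf \<rho> u) (at u)"
  unfolding sin_sf_def[abs_def] cos_sf_def
  by (auto intro!: derivative_eq_intros simp: mult.assoc)

lemma has_real_derivative_cos_sf: "(cos_sf \<rho> has_real_derivative - \<rho> * sin_sf \<rho> u) (at u)"
proof -
  consider "\<rho> > 0" | "\<rho> < 0" | "\<rho> = 0" by linarith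
  then show ?thesis
  proof cases
    case 1
    define r where "r = sqrt \<rho>"
    have r: "r > 0" "r * r = \<rho>" using 1 by (simp_all add: r_def)
    have "((\<lambda>u. cos (r * u)) has_real_derivative - (r * r) * (sin (r * u) / r)) (at u)"
      using r(1) by (auto intro!: derivative_eq_intros)
    then show ?thesis using 1 r(2) by (simp add: cos_sf_def[abs_def] sin_sf_def flip: r_def)
  next
    case 2
    define r where "r = sqrt (- \<rho>)"
    have r: "r > 0" "r * r = - \<rho>" using 2 by (simp_all add: r_def)
    have "((\<lambda>u. cosh (r * u)) has_real_derivative (r * r) * (sinh (r * u) / r)) (at u)"
      using r(1) by (auto intro!: derivative_eq_intros)
    then show ?thesis using 2 r(2) by (simp add: cos_sf_def[abs_def] sin_sf_def flip: r_def)
  qed (simp add: cos_sf_def[abs_def])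
qed

lemma cos_sf_sq_plus_sin_sf_sq: "cos_sf \<rho> u * cos_sf \<rho> u + \<rho> * (sin_sf \<rho> u * sin_sf \<rho> u) = 1"
proof -
  consider "\<rho> > 0" | "\<rho> < 0" | "\<rho> = 0" by linarith
  then show ?thesis
  proof cases
    case 1
    then show ?thesis
      using sin_cos_squared_add[of "sqrt \<rho> * u"]
      by (simp add: sin_sf_def cos_sf_def field_simps power2_eq_square real_sqrt_mult_self)
  next
    case 2
    then show ?thesis
      using cosh_square_eq[of "sqrt (- \<rho>) * u"]
      by (simp add: sin_sf_def cos_sf_def field_simps power2_eq_square real_sqrt_mult_self)
  qed (simp add: sin_sf_def cos_sf_def)
qed

definition sin_sf_deriv :: "real \<Rightarrow> nat \<Rightarrow> real \<Rightarrow> real" where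
  "sin_sf_deriv \<rho> k u = (- \<rho>) ^ (k div 2) * (if even k then sin_sf \<rho> u else cos_sf \<rho> u)"

lemma sin_sf_deriv_0_1 [simp]: "sin_sf_deriv \<rho> 0 = sin_sf \<rho>" "sin_sf_deriv \<rho> (Suc 0) = cos_sf \<rho>"
  by (simp_all add: sin_sf_deriv_def[abs_def])

lemma has_real_derivative_sin_sf_deriv:
  "(sin_sf_deriv \<rho> k has_real_derivative sin_sf_deriv \<rho> (Suc k) u) (at u)"
proof (cases "even k")
  case True
  then have "sin_sf_deriv \<rho> k = (\<lambda>u. (- \<rho>) ^ (k div 2) * sin_sf \<rho> u)"
    "sin_sf_deriv \<rho> (Suc k) u = (- \<rho>) ^ (k div 2) * cos_sf \<rho> u"
    by (auto simp: sin_sf_deriv_def[abs_def])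
  then show ?thesis by (auto intro!: derivative_eq_intros has_real_derivative_sin_sf)
next
  case False
  then have "sin_sf_deriv \<rho> k = (\<lambda>u. (- \<rho>) ^ (k div 2) * cos_sf \<rho> u)"
    "sin_sf_deriv \<rho> (Suc k) u = (- \<rho>) ^ (k div 2) * (- \<rho> * sin_sf \<rho> u)"
    by (auto simp: sin_sf_deriv_def[abs_def] elim!: oddE)
  then show ?thesis by (auto intro!: derivative_eq_intros has_real_derivative_cos_sf)
qed

datatype outer = Flat | Sin_sf | Exp

fun outer_tower :: "real \<Rightarrow> outer \<Rightarrow> nat \<Rightarrow> real \<Rightarrow> real" where
  "outer_tower \<rho> Flat k = flat_exp k"
| "outer_tower \<rho> Sin_sf k = sin_sf_deriv \<rho> k"
| "outer_tower \<rho> Exp k = exp"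

lemma derivative_tower_outer: "derivative_tower_on UNIV (outer_tower \<rho>)"
  unfolding derivative_tower_on_def
proof (intro allI ballI)
  fix j k and u :: real
  show "(outer_tower \<rho> j k has_real_derivative outer_tower \<rho> j (Suc k) u) (at u)"
    by (cases j) (simp_all add: has_real_derivative_flat_exp has_real_derivative_sin_sf_deriv)
qed

definition stm_diff :: "('i, 'j) stm \<Rightarrow> ('i, 'j) stm \<Rightarrow> ('i, 'j) stm" where
  "stm_diff e e' = Add e (Mul (Cst (-1)) e')"

definition cross_stm ::
    "real \<Rightarrow> (3 \<Rightarrow> ('i, 'j) stm) \<Rightarrow> (3 \<Rightarrow> ('i, 'j) stm) \<Rightarrow> 3 \<Rightarrow> ('i, 'j) stm" where
  "cross_stm \<rho> X Y n =
     (if n = 1 then stm_diff (Mul (X 2) (Y 3)) (Mul (X 3) (Y 2))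
      else if n = 2 then stm_diff (Mul (X 3) (Y 1)) (Mul (X 1) (Y 3))
      else Mul (Cst (sf_sign \<rho>)) (stm_diff (Mul (X 1) (Y 2)) (Mul (X 2) (Y 1))))"

definition det3_stm ::
    "(3 \<Rightarrow> ('i, 'j) stm) \<Rightarrow> (3 \<Rightarrow> ('i, 'j) stm) \<Rightarrow> (3 \<Rightarrow> ('i, 'j) stm) \<Rightarrow> ('i, 'j) stm" where
  "det3_stm X Y Z =
     Add (stm_diff (Mul (X 1) (stm_diff (Mul (Y 2) (Z 3)) (Mul (Y 3) (Z 2))))
                   (Mul (X 2) (stm_diff (Mul (Y 1) (Z 3)) (Mul (Y 3) (Z 1)))))
         (Mul (X 3) (stm_diff (Mul (Y 1) (Z 2)) (Mul (Y 2) (Z 1))))"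

lemma stm_vec_cross_stm:
  "stm_vec B H (cross_stm \<rho> X Y) x = sf_cross \<rho> (stm_vec B H X x) (stm_vec B H Y x)"
  by (simp add: vec_eq_iff forall_3 cross_stm_def stm_diff_def sf_cross_def)

lemma stm_eval_det3_stm:
  "stm_eval B H (det3_stm X Y Z) x = det3 (stm_vec B H X x) (stm_vec B H Y x) (stm_vec B H Z x)"
  by (simp add: det3_stm_def stm_diff_def det3_def algebra_simps)

lemma stm_free_of_t_cross_stm:
  "(\<And>n. stm_free_of_t (X n)) \<Longrightarrow> (\<And>n. stm_free_of_t (Y n)) \<Longrightarrow> stm_free_of_t (cross_stm \<rho> X Y n)"
  by (simp add: cross_stm_def stm_diff_def)

definition normal_stm :: "real \<Rightarrow> 3 \<Rightarrow> (3, outer) stm" where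
  "normal_stm \<rho> n = (if \<rho> = 0 then Cst (axis 3 1 $ n) else Mul (Cst (normal_scale \<rho>)) (Base n 0))"

definition conormal_stm :: "real \<Rightarrow> 3 \<Rightarrow> (3, outer) stm" where
  "conormal_stm \<rho> = cross_stm \<rho> (normal_stm \<rho>) (\<lambda>n. Base n 1)"

definition kappa_stm :: "real \<Rightarrow> (3, outer) stm" where
  "kappa_stm \<rho> = det3_stm (normal_stm \<rho>) (\<lambda>n. Base n 1) (\<lambda>n. Base n 2)"

definition weight_stm :: "real \<Rightarrow> real \<Rightarrow> (3, outer) stm" where
  "weight_stm \<rho> \<mu> = App Exp 0 (Mul (Cst \<mu>) (kappa_stm \<rho>))"

definition curve_coord :: "(real \<Rightarrow> real^3) \<Rightarrow> 3 \<Rightarrow> nat \<Rightarrow> real \<Rightarrow> real" where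
  "curve_coord c n k s = curve_deriv c k s $ n"

context unit_speed_curve
begin

lemma derivative_tower_curve_coord: "derivative_tower_on I (curve_coord \<gamma>)"
  unfolding derivative_tower_on_def curve_coord_def[abs_def]
  using has_real_derivative_vec_nth[OF has_vector_derivative_D] by blast

sublocale smooth_terms I "curve_coord \<gamma>" "outer_tower \<rho>"
  using open_I derivative_tower_curve_coord derivative_tower_outer by unfold_locales

abbreviation "tfun \<equiv> stm_eval (curve_coord \<gamma>) (outer_tower \<rho>)"
abbreviation "tvec \<equiv> stm_vec (curve_coord \<gamma>) (outer_tower \<rho>)"

lemma tvec_Base: "tvec (\<lambda>n. Base n k) (t, s) = D k s"
  by (simp add: vec_eq_iff curve_coord_def)

lemma tvec_normal_stm: "tvec (normal_stm \<rho>) (t, s) = N s"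
  by (auto simp: vec_eq_iff normal_stm_def N_def sf_normal_def curve_coord_def D_0 normal_scale_def)

lemma tvec_conormal_stm: "tvec (conormal_stm \<rho>) (t, s) = conormal s"
proof -
  have "tvec (\<lambda>n. Base n 1) (t, s) = D 1 s" by (rule tvec_Base)
  then show ?thesis
    by (simp add: conormal_stm_def stm_vec_cross_stm tvec_normal_stm conormal_def)
qed

lemma tfun_kappa_stm: "tfun (kappa_stm \<rho>) (t, s) = kappa s"
  by (simp add: kappa_stm_def stm_eval_det3_stm tvec_normal_stm tvec_Base kappa_def
      del: stm_vec_nth)

lemma tfun_weight_stm: "tfun (weight_stm \<rho> \<mu>) (t, s) = exp (\<mu> * kappa s)"
  by (simp add: weight_stm_def tfun_kappa_stm)

lemma stm_free_of_t_conormal_stm: "stm_free_of_t (conormal_stm \<rho> n)"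
  by (auto simp: conormal_stm_def normal_stm_def intro!: stm_free_of_t_cross_stm)

definition "kappa' s = tfun (stm_ds (kappa_stm \<rho>)) (0, s)"

lemma has_real_derivative_kappa: "s \<in> I \<Longrightarrow> (kappa has_real_derivative kappa' s) (at s)"
  using has_real_derivative_stm_eval_s[of s "kappa_stm \<rho>" 0] by (simp add: tfun_kappa_stm kappa'_def)

lemma tfun_conormal_stm: "tfun (conormal_stm \<rho> n) (t, s) = conormal s $ n"
  using arg_cong[OF tvec_conormal_stm, of "\<lambda>v. v $ n" t s] by simp

end

section \<open>The normal variation\<close>

locale curve_window = unit_speed_curve +
  fixes a b :: real
  assumes window: "a < b" "{a..b} \<subseteq> I"
begin

abbreviation "\<phi> \<equiv> bump_on a b"

definition "bump_stm = Mul (App Flat 0 (Add Svar (Cst (- a)))) (App Flat 0 (Add (Cst b) (Mul (Cst (-1)) Svar)))"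

lemma tfun_bump_stm [simp]: "tfun bump_stm x = \<phi> (snd x)"
  by (simp add: bump_stm_def bump_on_def)

definition "\<phi>' s = tfun (stm_ds bump_stm) (0, s)"
definition "\<phi>'' s = tfun (stm_ds (stm_ds bump_stm)) (0, s)"

lemma has_real_derivative_phi: "s \<in> I \<Longrightarrow> (\<phi> has_real_derivative \<phi>' s) (at s)"
  using has_real_derivative_stm_eval_s[of s bump_stm 0] by (simp add: \<phi>'_def)

lemma has_real_derivative_phi': "s \<in> I \<Longrightarrow> (\<phi>' has_real_derivative \<phi>'' s) (at s)"
  using has_real_derivative_stm_eval_s[of s "stm_ds bump_stm" 0] by (simp add: \<phi>'_def[abs_def] \<phi>''_def)

lemma phi'_boundary: "\<phi>' a = 0" "\<phi>' b = 0"
  by (simp_all add: \<phi>'_def bump_stm_def flat_exp_eq_0)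

text \<open>The variation moves \<open>\<gamma> s\<close> the distance \<open>t * \<phi> s\<close> along the geodesic of the space form
  that leaves it in the conormal direction (a straight line if \<open>\<rho> = 0\<close>).\<close>
definition "var_stm n = Add (Mul (App Sin_sf 1 (Mul Tvar bump_stm)) (Base n 0))
  (Mul (App Sin_sf 0 (Mul Tvar bump_stm)) (conormal_stm \<rho> n))"

definition "var = tvec var_stm"
definition "var_s = tvec (\<lambda>n. stm_ds (var_stm n))"
definition "var_ss = tvec (\<lambda>n. stm_ds (stm_ds (var_stm n)))"
definition "var_t = tvec (\<lambda>n. stm_dt (var_stm n))"
definition "var_ts = tvec (\<lambda>n. stm_dt (stm_ds (var_stm n)))"
definition "var_tss = tvec (\<lambda>n. stm_dt (stm_ds (stm_ds (var_stm n))))"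

lemma tfun_var_stm:
  "tfun (var_stm n) x = var x $ n" "tfun (stm_ds (var_stm n)) x = var_s x $ n"
  "tfun (stm_dt (var_stm n)) x = var_t x $ n" "tfun (stm_dt (stm_ds (var_stm n))) x = var_ts x $ n"
  "tfun (stm_ds (stm_dt (var_stm n))) x = var_ts x $ n"
  "tfun (stm_ds (stm_dt (stm_ds (var_stm n)))) x = var_tss x $ n"
  by (simp_all add: var_def var_s_def var_t_def var_ts_def var_tss_def stm_eval_dt_ds)

lemma var_eq: "var (t, s) = cos_sf \<rho> (t * \<phi> s) *\<^sub>R \<gamma> s + sin_sf \<rho> (t * \<phi> s) *\<^sub>R conormal s"
  by (simp add: var_def vec_eq_iff var_stm_def tfun_conormal_stm curve_coord_def D_0)

lemma var_0: "var (0, s) = \<gamma> s"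
  by (simp add: var_eq)

definition "variation_field s = \<phi> s *\<^sub>R conormal s"

lemma var_t_0: "var_t (0, s) = variation_field s"
  by (simp add: var_t_def variation_field_def vec_eq_iff var_stm_def tfun_conormal_stm sin_sf_deriv_def
      stm_eval_dt_free_of_t[OF stm_free_of_t_conormal_stm])

lemma var_s_0: assumes "s \<in> I" shows "var_s (0, s) = D 1 s"
proof -
  have "tfun (stm_ds (var_stm n)) (0, s) = D 1 s $ n" for n
    by (rule stm_eval_ds_unique[OF open_I order_refl assms, of _ _ "\<lambda>s. \<gamma> s $ n"])
       (use has_real_derivative_vec_nth[OF has_vector_derivative_gamma[OF assms]]
         in \<open>auto simp: tfun_var_stm var_0\<close>)
  then show ?thesis by (simp add: var_s_def vec_eq_iff)
qed

lemma var_ss_0: assumes "s \<in> I" shows "var_ss (0, s) = D 2 s"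
proof -
  have "tfun (stm_ds (stm_ds (var_stm n))) (0, s) = D 2 s $ n" for n
    by (rule stm_eval_ds_unique[OF open_I order_refl assms, of _ _ "\<lambda>s. D 1 s $ n"])
       (use has_real_derivative_vec_nth[OF has_vector_derivative_D_1[OF assms]]
         in \<open>auto simp: tfun_var_stm var_s_0\<close>)
  then show ?thesis by (simp add: var_ss_def vec_eq_iff)
qed

definition "variation_field' s = \<phi>' s *\<^sub>R conormal s - (\<phi> s * kappa s) *\<^sub>R D 1 s"
definition "variation_field'' s = \<phi>'' s *\<^sub>R conormal s - (\<phi>' s * kappa s) *\<^sub>R D 1 s
  - (\<phi>' s * kappa s + \<phi> s * kappa' s) *\<^sub>R D 1 s - (\<phi> s * kappa s) *\<^sub>R D 2 s"

lemma has_vector_derivative_variation_field: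
  assumes "s \<in> I" shows "(variation_field has_vector_derivative variation_field' s) (at s)"
  unfolding variation_field_def[abs_def]
  using has_vector_derivative_scaleR[OF has_real_derivative_phi has_vector_derivative_conormal, OF assms assms]
  by (simp add: variation_field'_def algebra_simps)

lemma has_vector_derivative_variation_field':
  assumes "s \<in> I" shows "(variation_field' has_vector_derivative variation_field'' s) (at s)"
proof -
  have "((\<lambda>s. \<phi> s * kappa s) has_real_derivative \<phi>' s * kappa s + \<phi> s * kappa' s) (at s)"
    using DERIV_mult[OF has_real_derivative_phi has_real_derivative_kappa, OF assms assms]
    by (simp add: mult.commute)
  from has_vector_derivative_diff[OF
      has_vector_derivative_scaleR[OF has_real_derivative_phi' has_vector_derivative_conormal]
      has_vector_derivative_scaleR[OF this has_vector_derivative_D_1], OF assms assms assms]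
  show ?thesis by (simp add: variation_field'_def[abs_def] variation_field''_def algebra_simps)
qed

lemma var_ts_0: assumes "s \<in> I" shows "var_ts (0, s) = variation_field' s"
proof -
  have "tfun (stm_ds (stm_dt (var_stm n))) (0, s) = variation_field' s $ n" for n
    by (rule stm_eval_ds_unique[OF open_I order_refl assms, of _ _ "\<lambda>s. variation_field s $ n"])
       (use has_real_derivative_vec_nth[OF has_vector_derivative_variation_field[OF assms]]
         in \<open>auto simp: tfun_var_stm var_t_0\<close>)
  then show ?thesis by (simp add: var_ts_def vec_eq_iff stm_eval_dt_ds)
qed

lemma var_tss_0: assumes "s \<in> I" shows "var_tss (0, s) = variation_field'' s"
proof -
  have "tfun (stm_ds (stm_dt (stm_ds (var_stm n)))) (0, s) = variation_field'' s $ n" for n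
    by (rule stm_eval_ds_unique[OF open_I order_refl assms, of _ _ "\<lambda>s. variation_field' s $ n"])
       (use has_real_derivative_vec_nth[OF has_vector_derivative_variation_field'[OF assms]]
         in \<open>auto simp: tfun_var_stm var_ts_0\<close>)
  then show ?thesis by (simp add: var_tss_def vec_eq_iff stm_eval_dt_ds)
qed

lemma var_outside_window: assumes "s \<notin> {a<..<b}" shows "var (t, s) = \<gamma> s"
proof -
  have "\<phi> s = 0" using assms by (intro bump_on_eq_0) auto
  then show ?thesis by (simp add: var_eq)
qed

lemma var_s_outside_window:
  assumes "s \<in> I" "s \<notin> {a..b}" shows "var_s (t, s) = D 1 s"
proof -
  have "tfun (stm_ds (var_stm n)) (t, s) = D 1 s $ n" for n
  proof (rule stm_eval_ds_unique[of "I - {a..b}" _ _ _ "\<lambda>s. \<gamma> s $ n"])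
    show "\<forall>s'\<in>I - {a..b}. tfun (var_stm n) (t, s') = \<gamma> s' $ n"
      using var_outside_window by (auto simp: tfun_var_stm)
  qed (use assms open_I has_real_derivative_vec_nth[OF has_vector_derivative_gamma[OF assms(1)]]
      in \<open>auto intro: open_Diff\<close>)
  then show ?thesis by (simp add: var_s_def vec_eq_iff)
qed

lemma vel_var: "s \<in> I \<Longrightarrow> vel (\<lambda>s. var (t, s)) s = var_s (t, s)"
  unfolding vel_def var_def var_s_def by (rule vector_derivative_at[OF has_vector_derivative_stm_vec_s])

lemma acc_var: assumes "s \<in> I" shows "acc (\<lambda>s. var (t, s)) s = var_ss (t, s)"
proof -
  have "(vel (\<lambda>s. var (t, s)) has_vector_derivative var_ss (t, s)) (at s)"
    by (rule has_vector_derivative_transform_within_open[OF _ open_I assms])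
       (use has_vector_derivative_stm_vec_s[OF assms] in \<open>auto simp: vel_var var_s_def var_ss_def\<close>)
  then show ?thesis unfolding acc_def by (rule vector_derivative_at)
qed

lemma Theta_var:
  "Theta \<rho> \<mu> (\<lambda>s. var (t, s)) a b =
     integral {a..b} (\<lambda>s. energy_density \<rho> \<mu> (var (t, s)) (var_s (t, s)) (var_ss (t, s)))"
  unfolding Theta_eq_integral_energy_density
  by (rule integral_cong) (use window in \<open>auto simp: vel_var acc_var\<close>)

lemma smooth_var: "smooth_on (S \<times> I) var"
  unfolding var_def by (rule smooth_on_stm_vec) auto

lemma var_on_quadric:
  assumes "s \<in> I" "\<rho> \<noteq> 0" shows "sf_form \<rho> (var (t, s)) (var (t, s)) = 1 / \<rho>"
proof -
  let ?C = "cos_sf \<rho> (t * \<phi> s)" and ?S = "sin_sf \<rho> (t * \<phi> s)"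
  have "sf_form \<rho> (var (t, s)) (var (t, s)) = ?C * ?C * (1 / \<rho>) + ?S * ?S"
    using curve_on_quadric[OF assms(2,1)] conormal_facts[OF assms(1)] assms(2)
    by (simp add: var_eq sf_form_bilinear sf_form_sym[of \<rho> "conormal s" "\<gamma> s"] algebra_simps)
  also have "\<dots> = (?C * ?C + \<rho> * (?S * ?S)) / \<rho>" using assms(2) by (simp add: field_simps)
  finally show ?thesis by (simp add: cos_sf_sq_plus_sin_sf_sq)
qed

lemma var_in_space_form: assumes "s \<in> I" shows "var (t, s) \<in> space_form \<rho>"
proof -
  consider "\<rho> = 0" | "\<rho> > 0" | "\<rho> < 0" by linarith
  then show ?thesis
  proof cases
    case 1
    have "var (t, s) $ 3 = 0"
      using curve_in_plane(1)[OF 1 assms] conormal_facts(2)[OF assms 1] by (simp add: var_eq)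
    then show ?thesis using 1 by (simp add: space_form_def)
  next
    case 2
    then show ?thesis using var_on_quadric[OF assms] by (simp add: space_form_def)
  next
    case 3
    have nonzero: "var (t', s) $ 3 \<noteq> 0" for t'
    proof
      assume "var (t', s) $ 3 = 0"
      then have "sf_form \<rho> (var (t', s)) (var (t', s)) \<ge> 0" by (simp add: sf_form_def)
      then show False using var_on_quadric[OF assms, of t'] 3 by simp
    qed
    have cont: "continuous_on UNIV (\<lambda>t. var (t, s) $ 3)"
      using has_real_derivative_stm_eval_t[OF assms, of "var_stm 3"]
      by (auto intro!: continuous_at_imp_continuous_on DERIV_isCont simp: var_def)
    have "var (0, s) $ 3 > 0"
      using in_space_form assms 3 by (auto simp: var_0 space_form_def)
    then have "var (t, s) $ 3 > 0"
      by (rule continuous_nonvanishing_keeps_sign[OF cont nonzero])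
    then show ?thesis using 3 var_on_quadric[OF assms] by (simp add: space_form_def)
  qed
qed

end

section \<open>The first variation and the Euler-Lagrange equation\<close>

context unit_speed_curve
begin

definition "weight' \<mu> s = tfun (stm_ds (weight_stm \<rho> \<mu>)) (0, s)"
definition "weight'' \<mu> s = tfun (stm_ds (stm_ds (weight_stm \<rho> \<mu>))) (0, s)"

definition "euler_lagrange \<mu> s =
  \<mu> * weight'' \<mu> s + (\<mu> * (\<rho> + (kappa s)\<^sup>2) - kappa s) * exp (\<mu> * kappa s)"

lemma has_real_derivative_weight:
  "s \<in> I \<Longrightarrow> ((\<lambda>s. exp (\<mu> * kappa s)) has_real_derivative weight' \<mu> s) (at s)"
  using has_real_derivative_stm_eval_s[of s "weight_stm \<rho> \<mu>" 0]
  by (simp add: tfun_weight_stm weight'_def)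

lemma has_real_derivative_weight':
  "s \<in> I \<Longrightarrow> (weight' \<mu> has_real_derivative weight'' \<mu> s) (at s)"
  using has_real_derivative_stm_eval_s[of s "stm_ds (weight_stm \<rho> \<mu>)" 0]
  by (simp add: weight'_def[abs_def] weight''_def)

lemma continuous_on_tfun_0: "continuous_on I (\<lambda>s. tfun e (0, s))"
  by (rule continuous_on_compose2[OF continuous_on_stm_eval, of _ "\<lambda>s. (0, s)"])
     (auto intro!: continuous_intros)

lemma continuous_on_kappa: "continuous_on I kappa"
  using continuous_on_tfun_0[of "kappa_stm \<rho>"] by (simp add: tfun_kappa_stm)

lemma continuous_on_euler_lagrange: "continuous_on I (euler_lagrange \<mu>)"
  unfolding euler_lagrange_def[abs_def] weight''_def
  by (intro continuous_intros continuous_on_kappa continuous_on_tfun_0)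

lemma deriv2_exp_geod_curv:
  assumes "s \<in> I"
  shows "deriv (deriv (\<lambda>s. exp (\<mu> * geod_curv \<rho> \<gamma> s))) s = weight'' \<mu> s"
proof -
  let ?f = "\<lambda>s. exp (\<mu> * geod_curv \<rho> \<gamma> s)"
  have deriv1: "deriv ?f s' = weight' \<mu> s'" if "s' \<in> I" for s'
    by (rule DERIV_imp_deriv, rule has_field_derivative_transform_within_open
        [OF has_real_derivative_weight[OF that] open_I that])
       (simp add: geod_curv_eq_kappa)
  have "(deriv ?f has_real_derivative weight'' \<mu> s) (at s)"
    by (rule has_field_derivative_transform_within_open[OF has_real_derivative_weight'[OF assms]
          open_I assms]) (simp add: deriv1)
  then show ?thesis by (rule DERIV_imp_deriv)
qed

end

context curve_window
begin

definition "density_dt \<mu> x =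
  energy_density_dt \<rho> \<mu> (var x) (var_s x) (var_ss x) (var_t x) (var_ts x) (var_tss x)"

lemma density_dt_0:
  assumes "s \<in> I"
  shows "density_dt \<mu> (0, s) =
    exp (\<mu> * kappa s) * (\<mu> * (\<phi>'' s + (\<rho> + (kappa s)\<^sup>2) * \<phi> s) - kappa s * \<phi> s)"
proof -
  note frame = conormal_facts[OF assms] tangent_unit[OF assms]
  have det3_frame: "det3 (N s) (conormal s) (D 1 s) = -1" "det3 (conormal s) (D 1 s) (N s) = -1"
    using frame det3_swap_23[of "N s" "conormal s"] det3_cyclic[of "conormal s" "D 1 s" "N s"]
      det3_cyclic[of "D 1 s" "N s" "conormal s"]
    by simp_all
  have speed': "sf_form \<rho> (D 1 s) (variation_field' s) = - (\<phi> s * kappa s)"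
    using frame by (simp add: variation_field'_def sf_form_bilinear)
  have "det3 (normal_scale \<rho> *\<^sub>R variation_field s) (D 1 s) (D 2 s)
      + det3 (N s) (variation_field' s) (D 2 s) + det3 (N s) (D 1 s) (variation_field'' s)
      = normal_scale \<rho> * (sf_sign \<rho> * normal_scale \<rho>) * \<phi> s + \<phi>'' s - 2 * kappa s * kappa s * \<phi> s"
    unfolding variation_field_def variation_field'_def variation_field''_def D_2_eq[OF assms]
    using frame det3_frame by (simp add: det3_trilinear det3_alternating del: One_nat_def)
  then have curvature': "det3 (normal_scale \<rho> *\<^sub>R variation_field s) (D 1 s) (D 2 s)
      + det3 (N s) (variation_field' s) (D 2 s) + det3 (N s) (D 1 s) (variation_field'' s)
      = \<phi>'' s + (\<rho> - 2 * (kappa s)\<^sup>2) * \<phi> s"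
    using sf_sign_normal_scale[of \<rho>] by (simp add: power2_eq_square algebra_simps)
  have "density_dt \<mu> (0, s) = exp (\<mu> * kappa s) *
      (\<mu> * (\<phi>'' s + (\<rho> - 2 * (kappa s)\<^sup>2) * \<phi> s - 3 * kappa s * - (\<phi> s * kappa s))
       - \<phi> s * kappa s)"
    unfolding density_dt_def var_0 var_s_0[OF assms] var_ss_0[OF assms] var_t_0 var_ts_0[OF assms]
      var_tss_0[OF assms] energy_density_dt_unit_speed[OF tangent_unit[OF assms]]
      N_def[symmetric] kappa_def[symmetric] curvature' speed'
    by simp
  moreover have "\<phi>'' s + (\<rho> - 2 * (kappa s)\<^sup>2) * \<phi> s - 3 * kappa s * - (\<phi> s * kappa s)
      = \<phi>'' s + (\<rho> + (kappa s)\<^sup>2) * \<phi> s"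
    by (simp add: power2_eq_square algebra_simps)
  ultimately show ?thesis by (simp add: mult.commute[of "kappa s"])
qed

lemma continuous_on_var_fields:
  assumes "S \<subseteq> UNIV \<times> I"
  shows "continuous_on S var" "continuous_on S var_s" "continuous_on S var_ss"
    "continuous_on S var_t" "continuous_on S var_ts" "continuous_on S var_tss"
  unfolding var_def var_s_def var_ss_def var_t_def var_ts_def var_tss_def
  by (intro continuous_on_subset[OF continuous_on_stm_vec assms])+

lemma regular_near_0:
  "\<exists>e>0. \<forall>t s. \<bar>t\<bar> < e \<longrightarrow> s \<in> I \<longrightarrow> sf_form \<rho> (var_s (t, s)) (var_s (t, s)) > 0"
proof -
  have cont: "continuous_on ({-1..1} \<times> {a..b}) (\<lambda>x. sf_form \<rho> (var_s x) (var_s x))"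
    using window by (intro continuous_intros continuous_on_var_fields) auto
  have slice: "\<forall>s\<in>{a..b}. sf_form \<rho> (var_s (0, s)) (var_s (0, s)) \<ge> 1"
  proof
    fix s assume "s \<in> {a..b}"
    then have "s \<in> I" using window by auto
    then show "sf_form \<rho> (var_s (0, s)) (var_s (0, s)) \<ge> 1"
      using tangent_unit by (simp add: var_s_0)
  qed
  obtain e where "e > 0"
    and "\<forall>t s. \<bar>t\<bar> < e \<longrightarrow> s \<in> {a..b} \<longrightarrow> sf_form \<rho> (var_s (t, s)) (var_s (t, s)) > 0"
    using positive_near_slice[OF cont zero_less_one slice] by blast
  then show ?thesis
    using var_s_outside_window tangent_unit by (metis zero_less_one)
qed

lemma continuous_on_densities:
  assumes "S \<subseteq> UNIV \<times> I" "\<And>x. x \<in> S \<Longrightarrow> sf_form \<rho> (var_s x) (var_s x) > 0"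
  shows "continuous_on S (\<lambda>x. energy_density \<rho> \<mu> (var x) (var_s x) (var_ss x))"
    "continuous_on S (density_dt \<mu>)"
  using continuous_on_energy_density[OF continuous_on_var_fields(1-3)[OF assms(1)] assms(2)]
    continuous_on_energy_density_dt[OF continuous_on_var_fields[OF assms(1)] assms(2)]
  by (simp_all add: density_dt_def[abs_def])

lemma has_derivative_Theta_var:
  assumes "e > 0"
    and regular: "\<forall>t s. \<bar>t\<bar> < e \<longrightarrow> s \<in> I \<longrightarrow> sf_form \<rho> (var_s (t, s)) (var_s (t, s)) > 0"
  shows "((\<lambda>t. Theta \<rho> \<mu> (\<lambda>s. var (t, s)) a b) has_real_derivative
           integral {a..b} (\<lambda>s. density_dt \<mu> (0, s))) (at 0)"
proof -
  let ?U = "{-e<..<e}"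
  let ?F = "\<lambda>x. energy_density \<rho> \<mu> (var x) (var_s x) (var_ss x)"
  have sub: "?U \<times> {a..b} \<subseteq> UNIV \<times> I" using window by auto
  have regular': "sf_form \<rho> (var_s x) (var_s x) > 0" if "x \<in> ?U \<times> {a..b}" for x
    using regular[rule_format, of "fst x" "snd x"] that window by (auto simp: mem_Times_iff)
  note continuous = continuous_on_densities[OF sub regular']
  have "((\<lambda>t. integral (cbox a b) (\<lambda>s. ?F (t, s))) has_real_derivative
      integral (cbox a b) (\<lambda>s. density_dt \<mu> (0, s))) (at 0 within ?U)"
  proof (rule leibniz_rule_field_derivative)
    fix t s assume "t \<in> ?U" "s \<in> cbox a b"
    then have s: "s \<in> I" and pos: "sf_form \<rho> (var_s (t, s)) (var_s (t, s)) > 0"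
      using window regular by auto
    have "((\<lambda>t. ?F (t, s)) has_real_derivative density_dt \<mu> (t, s)) (at t)"
      unfolding density_dt_def var_def var_s_def var_ss_def var_t_def var_ts_def var_tss_def
      by (rule has_real_derivative_energy_density[OF has_vector_derivative_stm_vec_t
            has_vector_derivative_stm_vec_t has_vector_derivative_stm_vec_t, OF s s s])
         (use pos in \<open>simp add: var_s_def\<close>)
    then show "((\<lambda>t. ?F (t, s)) has_real_derivative density_dt \<mu> (t, s)) (at t within ?U)"
      by (rule has_field_derivative_at_within)
  next
    fix t assume "t \<in> ?U"
    then have "continuous_on (cbox a b) (\<lambda>s. ?F (t, s))"
      by (intro continuous_on_compose2[OF continuous(1), of _ "\<lambda>s. (t, s)"] continuous_intros) auto
    then show "(\<lambda>s. ?F (t, s)) integrable_on cbox a b"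
      by (rule integrable_continuous)
  next
    show "continuous_on (?U \<times> cbox a b) (\<lambda>(t, s). density_dt \<mu> (t, s))"
      using continuous(2) by (simp add: case_prod_eta)
  qed (use \<open>e > 0\<close> in auto)
  then show ?thesis
    using at_within_open[of 0 ?U] \<open>e > 0\<close> by (simp add: Theta_var)
qed

lemma first_variation:
  assumes "Theta_critical \<rho> \<mu> I \<gamma>"
  shows "integral {a..b} (\<lambda>s. density_dt \<mu> (0, s)) = 0"
proof -
  obtain e where e: "e > 0"
    and regular: "\<forall>t s. \<bar>t\<bar> < e \<longrightarrow> s \<in> I \<longrightarrow> sf_form \<rho> (var_s (t, s)) (var_s (t, s)) > 0"
    using regular_near_0 by blast
  let ?U = "{-e<..<e}"
  have "((\<lambda>t. Theta \<rho> \<mu> (\<lambda>s. var (t, s)) a b) has_real_derivative 0) (at 0)"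
  proof (rule assms[unfolded Theta_critical_def, rule_format])
    show "0 < e \<and> a \<le> b \<and> {a..b} \<subseteq> I \<and> smooth_on (?U \<times> I) var \<and>
      (\<forall>t\<in>?U. \<forall>s\<in>I. var (t, s) \<in> space_form \<rho>) \<and>
      (\<forall>t\<in>?U. \<forall>s\<in>I. vel (\<lambda>s'. var (t, s')) s \<noteq> 0) \<and>
      (\<forall>s\<in>I. var (0, s) = \<gamma> s) \<and> (\<forall>t\<in>?U. \<forall>s\<in>I - {a..b}. var (t, s) = \<gamma> s)"
    proof (intro conjI ballI)
      show "vel (\<lambda>s'. var (t, s')) s \<noteq> 0" if "t \<in> ?U" "s \<in> I" for t s
      proof
        assume "vel (\<lambda>s'. var (t, s')) s = 0"
        then have "sf_form \<rho> (var_s (t, s)) (var_s (t, s)) = 0"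
          using vel_var[OF that(2)] by (simp add: sf_form_def)
        then show False using regular[rule_format, of t s] that by (auto simp: abs_less_iff)
      qed
      show "var (t, s) = \<gamma> s" if "s \<in> I - {a..b}" for t s
        using that by (intro var_outside_window) auto
    qed (use e window smooth_var var_in_space_form var_0 in auto)
  qed
  with has_derivative_Theta_var[OF e regular] show ?thesis
    using DERIV_unique by blast
qed

lemma weak_euler_lagrange:
  assumes "Theta_critical \<rho> \<mu> I \<gamma>"
  shows "((\<lambda>s. \<phi> s * euler_lagrange \<mu> s) has_integral 0) {a..b}"
proof -
  have I: "s \<in> I" if "s \<in> {a..b}" for s using that window by auto
  let ?P = "\<lambda>s. exp (\<mu> * kappa s)"
  have "continuous_on {a..b}
      (\<lambda>s. ?P s * (\<mu> * (\<phi>'' s + (\<rho> + (kappa s)\<^sup>2) * \<phi> s) - kappa s * \<phi> s))"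
    unfolding \<phi>''_def
    by (intro continuous_intros continuous_on_subset[OF continuous_on_kappa]
        continuous_on_subset[OF continuous_on_tfun_0]) (use window in auto)
  then have "continuous_on {a..b} (\<lambda>s. density_dt \<mu> (0, s))"
    by (rule continuous_on_eq) (use density_dt_0 I in presburger)
  then have first: "((\<lambda>s. density_dt \<mu> (0, s)) has_integral 0) {a..b}"
    using first_variation[OF assms] integrable_continuous_interval has_integral_integral by metis
  have "((\<lambda>s. ?P s * \<phi>'' s - weight'' \<mu> s * \<phi> s) has_integral
      (?P b * \<phi>' b - weight' \<mu> b * \<phi> b) - (?P a * \<phi>' a - weight' \<mu> a * \<phi> a)) {a..b}"
    by (rule has_integral_Lagrange_identity[OF less_imp_le[OF window(1)]])
       (auto intro!: has_real_derivative_weight has_real_derivative_weight' has_real_derivative_phi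
         has_real_derivative_phi' I)
  then have by_parts: "((\<lambda>s. ?P s * \<phi>'' s - weight'' \<mu> s * \<phi> s) has_integral 0) {a..b}"
    by (simp add: phi'_boundary bump_on_eq_0)
  have "((\<lambda>s. density_dt \<mu> (0, s) - \<mu> * (?P s * \<phi>'' s - weight'' \<mu> s * \<phi> s)) has_integral 0 - \<mu> * 0) {a..b}"
    by (intro has_integral_diff has_integral_mult_right first by_parts)
  then have integral: "((\<lambda>s. density_dt \<mu> (0, s) - \<mu> * (?P s * \<phi>'' s - weight'' \<mu> s * \<phi> s))
      has_integral 0) {a..b}"
    by simp
  have rearrange: "P * (\<mu> * (f'' + r * f) - k * f) - \<mu> * (P * f'' - w * f) = f * (\<mu> * w + (\<mu> * r - k) * P)"
    for P f f'' k r w :: real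
    by (simp add: algebra_simps)
  have "density_dt \<mu> (0, s) - \<mu> * (?P s * \<phi>'' s - weight'' \<mu> s * \<phi> s)
      = \<phi> s * euler_lagrange \<mu> s" if "s \<in> {a..b}" for s
    unfolding density_dt_0[OF I[OF that]] euler_lagrange_def by (rule rearrange)
  from has_integral_eq[OF this integral] show ?thesis .
qed

end

theorem proposition2p2:
  fixes \<rho> \<mu> :: real and I :: "real set" and \<gamma> :: "real \<Rightarrow> real^3"
  assumes "\<mu> \<noteq> 0"
    and "open I" and "is_interval I" and "I \<noteq> {}"
    and "smooth_on I \<gamma>"
    and "\<forall>s\<in>I. \<gamma> s \<in> space_form \<rho>"
    and "\<forall>s\<in>I. sf_form \<rho> (vel \<gamma> s) (vel \<gamma> s) = 1"
    and "\<exists>s\<in>I. geod_curv \<rho> \<gamma> s \<noteq> 0"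
    and "Theta_critical \<rho> \<mu> I \<gamma>"
  shows "\<forall>s\<in>I. deriv (deriv (\<lambda>s. exp (\<mu> * geod_curv \<rho> \<gamma> s))) s
               + ((geod_curv \<rho> \<gamma> s)\<^sup>2 - geod_curv \<rho> \<gamma> s / \<mu> + \<rho>) * exp (\<mu> * geod_curv \<rho> \<gamma> s) = 0"
proof
  interpret unit_speed_curve \<rho> I \<gamma> using assms(2,5,6,7) by unfold_locales
  have weak: "((\<lambda>s. bump_on a b s * euler_lagrange \<mu> s) has_integral 0) {a..b}"
    if "a < b" "{a..b} \<subseteq> I" for a b
  proof -
    interpret curve_window \<rho> I \<gamma> a b using that by unfold_locales
    show ?thesis by (rule weak_euler_lagrange[OF assms(9)])
  qed
  fix s assume s: "s \<in> I"
  have "euler_lagrange \<mu> s = 0"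
    by (rule fundamental_lemma_calculus_of_variations[OF open_I continuous_on_euler_lagrange weak s])
  then show "deriv (deriv (\<lambda>s. exp (\<mu> * geod_curv \<rho> \<gamma> s))) s
      + ((geod_curv \<rho> \<gamma> s)\<^sup>2 - geod_curv \<rho> \<gamma> s / \<mu> + \<rho>) * exp (\<mu> * geod_curv \<rho> \<gamma> s) = 0"
    using assms(1)
    by (simp add: deriv2_exp_geod_curv[OF s] geod_curv_eq_kappa[OF s] euler_lagrange_def field_simps)
qed

end
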